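(* Let $E$ be a realizable matrix of rank $k$, and let $A$ be a $(0,1)$ matrix such that $A$ and $A+E$ are Gram mates. Then there exist $k$ positive singular values of $A$ such that the set of their corresponding right (resp. left) singular vectors is a basis of $\mathrm{Row}(E)$ (resp. $\mathrm{Col}(E)$); that is, there is a singular value decomposition $A=U\Sigma V^T$ and $k$ indices $i$ with $\Sigma_{ii}>0$ such that the corresponding $k$ columns of $V$ form a basis of $\mathrm{Row}(E)$ and the corresponding $k$ columns of $U$ form a basis of $\mathrm{Col}(E)$.
   Context: Two $(0,1)$ matrices $A,B$ are Gram mates if $AA^T=BB^T$, $A^TA=B^TB$ and $A\neq B$. A $(0,1,-1)$ matrix $E$ with $E\mathbf 1=0$ and $\mathbf 1^TE=0^T$ is realizable if there is a $(0,1)$ matrix $A$ such that $A$ and $A+E$ are Gram mates. *)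

theory Defs
  imports "Jordan_Normal_Form.DL_Rank"
begin

definition zero_one_mat :: "real mat \<Rightarrow> bool" where
  "zero_one_mat A \<longleftrightarrow>
     (\<forall>i < dim_row A. \<forall>j < dim_col A. A $$ (i,j) = 0 \<or> A $$ (i,j) = 1)"

definition signed_mat :: "real mat \<Rightarrow> bool" where
  "signed_mat E \<longleftrightarrow>
     (\<forall>i < dim_row E. \<forall>j < dim_col E. E $$ (i,j) \<in> {-1, 0, 1})"

definition gram_mates :: "real mat \<Rightarrow> real mat \<Rightarrow> bool" where
  "gram_mates A B \<longleftrightarrow>
     zero_one_mat A \<and> zero_one_mat B \<and>
     dim_row A = dim_row B \<and> dim_col A = dim_col B \<and>
     A * A\<^sup>T = B * B\<^sup>T \<and> A\<^sup>T * A = B\<^sup>T * B \<and> A \<noteq> B"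

definition realizable :: "real mat \<Rightarrow> bool" where
  "realizable E \<longleftrightarrow>
     signed_mat E \<and>
     E *\<^sub>v (vec (dim_col E) (\<lambda>_. 1)) = 0\<^sub>v (dim_row E) \<and>
     E\<^sup>T *\<^sub>v (vec (dim_row E) (\<lambda>_. 1)) = 0\<^sub>v (dim_col E) \<and>
     (\<exists>A. A \<in> carrier_mat (dim_row E) (dim_col E) \<and> zero_one_mat A \<and> gram_mates A (A + E))"

definition mat_rank :: "real mat \<Rightarrow> nat" where
  "mat_rank E = vec_space.rank (dim_row E) E"

definition basis_of :: "nat \<Rightarrow> real vec set \<Rightarrow> real vec set \<Rightarrow> bool" where
  "basis_of n W S \<longleftrightarrow>
     S \<subseteq> W \<and> finite S \<and>
     module.lin_indpt class_ring (module_vec TYPE(real) n) S \<and>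
     LinearCombinations.module.span class_ring (module_vec TYPE(real) n) S = W"

definition Row :: "real mat \<Rightarrow> real vec set" where
  "Row E = vec_space.row_space (dim_col E) E"

definition Col :: "real mat \<Rightarrow> real vec set" where
  "Col E = vec_space.col_space (dim_row E) E"

definition svd :: "real mat \<Rightarrow> real mat \<Rightarrow> real mat \<Rightarrow> real mat \<Rightarrow> bool" where
  "svd A U S V \<longleftrightarrow>
     (let m = dim_row A; n = dim_col A in
       U \<in> carrier_mat m m \<and> V \<in> carrier_mat n n \<and> S \<in> carrier_mat m n \<and>
       U\<^sup>T * U = 1\<^sub>m m \<and> V\<^sup>T * V = 1\<^sub>m n \<and>
       (\<forall>i < m. \<forall>j < n. i \<noteq> j \<longrightarrow> S $$ (i,j) = 0) \<and>
       (\<forall>i < min m n. 0 \<le> S $$ (i,i)) \<and>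
       (\<forall>i j. i \<le> j \<longrightarrow> j < min m n \<longrightarrow> S $$ (j,j) \<le> S $$ (i,i)) \<and>
       A = U * S * V\<^sup>T)"

end

(* Write B = A + E.  Expanding A A\<^sup>T = B B\<^sup>T and A\<^sup>T A = B\<^sup>T B gives the cross-term identities
   A E\<^sup>T = - E B\<^sup>T and A\<^sup>T E = - E\<^sup>T B.  The first shows that A\<^sup>T A maps Row E = Col E\<^sup>T into itself,
   so the symmetric matrix A\<^sup>T A has an orthonormal eigenbasis made of a basis of Row E and a basis
   of its orthogonal complement ker E; sorted by decreasing norm of A v these are the right singular
   vectors of an SVD of A.  Since ker A = ker B, A kills no nonzero vector of Row E, so the right
   singular vectors in Row E have positive singular values, and A E\<^sup>T = - E B\<^sup>T puts their left
   singular vectors A v / \<sigma> into Col E.  Every other left singular vector r satisfies E\<^sup>T r = 0: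
   either r is a multiple of A v with E v = 0 and E\<^sup>T A = - B\<^sup>T E, or A\<^sup>T r = 0 and then B\<^sup>T r = 0.
   Hence the chosen left singular vectors span Col E, and there are rank E of them.  Neither the
   (0,1) entries nor the realizability of E are needed, only the two Gram identities. *)

theory Submission
  imports Defs "Jordan_Normal_Form.Char_Poly"
begin

lemma scalar_prod_self_nonneg: "0 \<le> (v :: real vec) \<bullet> v"
  using conjugate_square_ge_0_vec[of v] by (simp add: conjugate_vec_def)

lemma scalar_prod_self_eq_0_iff:
  "(v :: real vec) \<in> carrier_vec n \<Longrightarrow> v \<bullet> v = 0 \<longleftrightarrow> v = 0\<^sub>v n"
  using conjugate_square_eq_0_vec[of v n] by (simp add: conjugate_vec_def)

lemma minus_vec_eq_0_iff:
  "(x :: 'a :: group_add vec) \<in> carrier_vec n \<Longrightarrow> y \<in> carrier_vec n \<Longrightarrow> x - y = 0\<^sub>v n \<longleftrightarrow> x = y"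
  by (auto simp: vec_eq_iff)

lemma mult_mat_vec_zero: "A \<in> carrier_mat m n \<Longrightarrow> A *\<^sub>v 0\<^sub>v n = (0\<^sub>v m :: 'a :: comm_ring vec)"
  by (intro eq_vecI) (auto simp: scalar_prod_def)

lemma mult_mat_vec_uminus:
  "(A :: 'a :: ring mat) \<in> carrier_mat m n \<Longrightarrow> v \<in> carrier_vec n \<Longrightarrow> A *\<^sub>v (- v) = - (A *\<^sub>v v)"
  by (intro eq_vecI) auto

lemma mult_mat_unit_vec:
  "(A :: 'a :: semiring_1 mat) \<in> carrier_mat m n \<Longrightarrow> j < n \<Longrightarrow> A *\<^sub>v unit_vec n j = col A j"
  by (intro eq_vecI) auto

lemma nonzero_kernel_vec_exists:
  fixes A :: "real mat"
  assumes A: "A \<in> carrier_mat r n" and rn: "r < n"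
  obtains x where "x \<in> carrier_vec n" "x \<noteq> 0\<^sub>v n" "A *\<^sub>v x = 0\<^sub>v r"
proof (cases "r = 0")
  case True
  have "unit_vec n 0 \<noteq> (0\<^sub>v n :: real vec)" using rn by (auto simp: vec_eq_iff)
  moreover have "A *\<^sub>v unit_vec n 0 = 0\<^sub>v r" using A True by (auto simp: vec_eq_iff)
  ultimately show ?thesis using that unit_vec_carrier by blast
next
  case False
  \<comment> \<open>pad A with copies of its first row to a singular square matrix\<close>
  define A' where "A' = mat n n (\<lambda>(i,j). if i < r then A $$ (i,j) else A $$ (0,j))"
  have A': "A' \<in> carrier_mat n n" unfolding A'_def by simp
  have "row A' 0 = row A' r" using rn False by (auto simp: A'_def row_def)
  hence "det A' = 0" using det_identical_rows[OF A', of 0 r] rn False by auto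
  then obtain x where x: "x \<in> carrier_vec n" "x \<noteq> 0\<^sub>v n" "A' *\<^sub>v x = 0\<^sub>v n"
    using det_0_iff_vec_prod_zero[OF A'] by auto
  have "(A *\<^sub>v x) $ i = (A' *\<^sub>v x) $ i" if "i < r" for i
    using that rn A x(1) by (auto simp: A'_def row_def scalar_prod_def)
  hence "A *\<^sub>v x = 0\<^sub>v r" using x(3) rn A by (auto simp: vec_eq_iff)
  with x show ?thesis using that by blast
qed

lemma normalized_vec:
  fixes x :: "real vec"
  assumes "x \<in> carrier_vec n" "x \<noteq> 0\<^sub>v n"
  shows "((1 / sqrt (x \<bullet> x)) \<cdot>\<^sub>v x) \<bullet> ((1 / sqrt (x \<bullet> x)) \<cdot>\<^sub>v x) = 1"
proof -
  have "x \<bullet> x > 0"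
    using scalar_prod_self_nonneg[of x] scalar_prod_self_eq_0_iff[OF assms(1)] assms(2) by linarith
  thus ?thesis using assms(1) by (simp add: scalar_prod_smult_left scalar_prod_smult_right)
qed

section \<open>Column spaces\<close>

lemma Col_eq: "F \<in> carrier_mat m q \<Longrightarrow> Col F = {F *\<^sub>v c | c. c \<in> carrier_vec q}"
  unfolding Col_def using vec_space.col_space_eq[of F m q] by auto

lemma Row_eq_Col_transpose: "Row E = Col E\<^sup>T"
  unfolding Row_def Col_def by (simp add: vec_space.row_space_eq_col_space_transpose)

lemma mult_mat_vec_in_Col: "F \<in> carrier_mat m q \<Longrightarrow> c \<in> carrier_vec q \<Longrightarrow> F *\<^sub>v c \<in> Col F"
  by (auto simp: Col_eq)

lemma ColE:
  assumes "F \<in> carrier_mat m q" "x \<in> Col F"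
  obtains c where "c \<in> carrier_vec q" "x = F *\<^sub>v c"
  using assms by (auto simp: Col_eq)

lemma Col_carrier: "F \<in> carrier_mat m q \<Longrightarrow> Col F \<subseteq> carrier_vec m"
  by (auto simp: Col_eq)

lemma Col_one_mat: "Col (1\<^sub>m n) = carrier_vec n"
proof -
  have "Col (1\<^sub>m n) = {1\<^sub>m n *\<^sub>v c | c. c \<in> carrier_vec n}" by (rule Col_eq[of _ n n]) simp
  also have "\<dots> = carrier_vec n"
  proof (intro equalityI subsetI)
    fix x :: "real vec" assume "x \<in> carrier_vec n"
    thus "x \<in> {1\<^sub>m n *\<^sub>v c | c. c \<in> carrier_vec n}" by (intro CollectI exI[of _ x]) simp
  qed auto
  finally show ?thesis .
qed

lemma col_in_Col: "F \<in> carrier_mat m q \<Longrightarrow> i < q \<Longrightarrow> col F i \<in> Col F"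
  using mult_mat_vec_in_Col[of F m q "unit_vec q i"] mult_mat_unit_vec[of F m q i] by simp

lemma set_subset_Col_mat_of_cols:
  assumes "set ws \<subseteq> carrier_vec n"
  shows "set ws \<subseteq> Col (mat_of_cols n ws)"
proof
  fix w assume "w \<in> set ws"
  then obtain j where j: "j < length ws" "w = ws ! j" by (auto simp: in_set_conv_nth)
  hence "w = col (mat_of_cols n ws) j" using assms by (simp add: col_mat_of_cols subsetD)
  thus "w \<in> Col (mat_of_cols n ws)" using col_in_Col[OF mat_of_cols_carrier(1) j(1)] by simp
qed

lemma Col_minus:
  assumes F: "F \<in> carrier_mat m q" and "x \<in> Col F" "y \<in> Col F"
  shows "x - y \<in> Col F"
proof -
  obtain c where "c \<in> carrier_vec q" "x = F *\<^sub>v c" using ColE[OF F assms(2)] by blast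
  moreover obtain d where "d \<in> carrier_vec q" "y = F *\<^sub>v d" using ColE[OF F assms(3)] by blast
  ultimately show ?thesis using F mult_mat_vec_in_Col[OF F, of "c - d"] by (simp add: mult_minus_distrib_mat_vec)
qed

lemma Col_smult:
  assumes F: "F \<in> carrier_mat m q" and "x \<in> Col F"
  shows "a \<cdot>\<^sub>v x \<in> Col F"
proof -
  obtain c where "c \<in> carrier_vec q" "x = F *\<^sub>v c" using ColE[OF F assms(2)] by blast
  thus ?thesis using F mult_mat_vec_in_Col[OF F, of "a \<cdot>\<^sub>v c"] by (simp add: mult_mat_vec)
qed

lemma span_eq_Col_mat_of_cols:
  assumes "set us \<subseteq> carrier_vec n"
  shows "LinearCombinations.module.span class_ring (module_vec TYPE(real) n) (set us)
    = Col (mat_of_cols n us)"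
  using assms by (simp add: Col_def vec_space.col_space_def cols_mat_of_cols)

lemma mat_of_cols_factor_through:
  assumes F: "F \<in> carrier_mat n q" and sub: "set us \<subseteq> Col F"
  obtains C where "C \<in> carrier_mat q (length us)" "mat_of_cols n us = F * C"
proof -
  have "\<forall>u\<in>set us. \<exists>c. c \<in> carrier_vec q \<and> u = F *\<^sub>v c" using sub F by (auto simp: Col_eq)
  then obtain f where f: "\<And>u. u \<in> set us \<Longrightarrow> f u \<in> carrier_vec q \<and> u = F *\<^sub>v f u" by metis
  define C where "C = mat_of_cols q (map f us)"
  have C: "C \<in> carrier_mat q (length us)" unfolding C_def using mat_of_cols_carrier(1)[of q "map f us"] by simp
  have "mat_of_cols n us = F * C"
  proof (rule mat_col_eqI)
    fix j assume "j < dim_col (F * C)"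
    hence j: "j < length us" using C by simp
    hence fj: "f (us ! j) \<in> carrier_vec q" "us ! j = F *\<^sub>v f (us ! j)" using f[of "us ! j"] by auto
    have "col (F * C) j = F *\<^sub>v f (us ! j)"
      using col_mult2[OF F C j] j fj(1) by (simp add: C_def col_mat_of_cols)
    also have "\<dots> = col (mat_of_cols n us) j"
      using j fj F by (metis col_mat_of_cols mult_mat_vec_carrier)
    finally show "col (mat_of_cols n us) j = col (F * C) j" by simp
  qed (use F C in auto)
  thus ?thesis using that C by blast
qed

lemma Col_mono:
  assumes F: "F \<in> carrier_mat n q" and G: "G \<in> carrier_mat n p" and sub: "set (cols G) \<subseteq> Col F"
  shows "Col G \<subseteq> Col F"
proof
  fix x assume "x \<in> Col G"
  then obtain c where c: "c \<in> carrier_vec p" "x = G *\<^sub>v c" using G by (auto elim: ColE)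
  obtain C where C: "C \<in> carrier_mat q p" "G = F * C"
    using mat_of_cols_factor_through[OF F sub] G mat_of_cols_cols[of G] by auto
  have "x = F *\<^sub>v (C *\<^sub>v c)" using c C F by (simp add: assoc_mult_mat_vec)
  thus "x \<in> Col F" using C c F by (simp add: mult_mat_vec_in_Col)
qed

lemma mat_of_cols_map_mult_mat_vec:
  assumes W: "W \<in> carrier_mat n p" and qs: "set qs \<subseteq> carrier_vec p"
  shows "mat_of_cols n (map ((*\<^sub>v) W) qs) = W * mat_of_cols p qs"
proof (rule mat_col_eqI)
  fix j assume "j < dim_col (W * mat_of_cols p qs)"
  hence j: "j < length qs" by simp
  have "qs ! j \<in> carrier_vec p" using j qs nth_mem by blast
  moreover have "W *\<^sub>v qs ! j \<in> carrier_vec n" using W calculation by simp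
  ultimately show "col (mat_of_cols n (map ((*\<^sub>v) W) qs)) j = col (W * mat_of_cols p qs) j"
    using j col_mult2[OF W mat_of_cols_carrier(1) j] by (simp add: col_mat_of_cols)
qed (use W in auto)

lemma Col_mult_right_invertible:
  fixes W Q R :: "real mat"
  assumes W: "W \<in> carrier_mat n p" and Q: "Q \<in> carrier_mat p p" and R: "R \<in> carrier_mat p p"
    and QR: "Q * R = 1\<^sub>m p"
  shows "Col (W * Q) = Col W"
proof
  show "Col (W * Q) \<subseteq> Col W"
  proof
    fix x assume "x \<in> Col (W * Q)"
    then obtain c where c: "c \<in> carrier_vec p" "x = (W * Q) *\<^sub>v c" using ColE[OF mult_carrier_mat[OF W Q]] by blast
    hence "x = W *\<^sub>v (Q *\<^sub>v c)" using assoc_mult_mat_vec[OF W Q c(1)] by simp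
    thus "x \<in> Col W" using mult_mat_vec_in_Col[OF W] Q c(1) by simp
  qed
  show "Col W \<subseteq> Col (W * Q)"
  proof
    fix x assume "x \<in> Col W"
    then obtain c where c: "c \<in> carrier_vec p" "x = W *\<^sub>v c" using ColE[OF W] by blast
    have "W *\<^sub>v c = W *\<^sub>v ((Q * R) *\<^sub>v c)" using QR c(1) by simp
    also have "\<dots> = (W * Q) *\<^sub>v (R *\<^sub>v c)"
      using assoc_mult_mat_vec[OF Q R c(1)] assoc_mult_mat_vec[OF W Q mult_mat_vec_carrier[OF R c(1)]] by simp
    finally show "x \<in> Col (W * Q)"
      using c mult_mat_vec_in_Col[OF mult_carrier_mat[OF W Q]] R by simp
  qed
qed

lemma Col_transpose_inter_kernel:
  fixes E :: "real mat"
  assumes E: "E \<in> carrier_mat m n" and v: "v \<in> Col E\<^sup>T" and Ev: "E *\<^sub>v v = 0\<^sub>v m"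
  shows "v = 0\<^sub>v n"
proof -
  have ET: "E\<^sup>T \<in> carrier_mat n m" using E by simp
  obtain y where y: "y \<in> carrier_vec m" "v = E\<^sup>T *\<^sub>v y" using ColE[OF ET v] by blast
  have vc: "v \<in> carrier_vec n" using y ET by simp
  have "v \<bullet> v = y \<bullet> (E *\<^sub>v v)" using transpose_vec_mult_scalar[OF E vc y(1)] y(2) by simp
  also have "\<dots> = 0" using Ev y(1) by simp
  finally show ?thesis using scalar_prod_self_eq_0_iff[OF vc] by simp
qed

section \<open>Orthonormal lists of vectors\<close>

definition orthonormal :: "nat \<Rightarrow> real vec list \<Rightarrow> bool" where
  "orthonormal n vs \<longleftrightarrow> set vs \<subseteq> carrier_vec n \<and> distinct vs \<and>
     (\<forall>u\<in>set vs. \<forall>w\<in>set vs. u \<bullet> w = (if u = w then 1 else 0))"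

lemma orthonormalD:
  assumes "orthonormal n vs"
  shows "set vs \<subseteq> carrier_vec n" "distinct vs" "u \<in> set vs \<Longrightarrow> u \<bullet> u = 1"
    "u \<in> set vs \<Longrightarrow> w \<in> set vs \<Longrightarrow> u \<noteq> w \<Longrightarrow> u \<bullet> w = 0"
  using assms by (auto simp: orthonormal_def)

lemma orthonormal_subset:
  "orthonormal n us \<Longrightarrow> set ws \<subseteq> set us \<Longrightarrow> distinct ws \<Longrightarrow> orthonormal n ws"
  unfolding orthonormal_def by blast

lemma orthonormal_append:
  assumes xs: "orthonormal n xs" and ys: "orthonormal n ys"
    and orth: "\<And>x y. x \<in> set xs \<Longrightarrow> y \<in> set ys \<Longrightarrow> x \<bullet> y = 0"
  shows "orthonormal n (xs @ ys)"
proof -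
  have carr: "set xs \<subseteq> carrier_vec n" "set ys \<subseteq> carrier_vec n"
    using xs ys by (auto dest: orthonormalD(1))
  have disj: "x \<noteq> y" if "x \<in> set xs" "y \<in> set ys" for x y
    using orth[OF that] orthonormalD(3)[OF xs that(1)] by auto
  have orth': "y \<bullet> x = 0" if "x \<in> set xs" "y \<in> set ys" for x y
    using orth[OF that] that carr comm_scalar_prod[of x n y] by auto
  show ?thesis unfolding orthonormal_def
  proof (intro conjI ballI)
    show "set (xs @ ys) \<subseteq> carrier_vec n" using carr by simp
    show "distinct (xs @ ys)" using disj orthonormalD(2)[OF xs] orthonormalD(2)[OF ys] by auto
    fix u w assume "u \<in> set (xs @ ys)" "w \<in> set (xs @ ys)"
    then consider "u \<in> set xs" "w \<in> set xs" | "u \<in> set ys" "w \<in> set ys"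
      | "u \<in> set xs" "w \<in> set ys" | "u \<in> set ys" "w \<in> set xs" by auto
    thus "u \<bullet> w = (if u = w then 1 else 0)"
    proof cases
      case 1 thus ?thesis using xs unfolding orthonormal_def by blast
    next
      case 2 thus ?thesis using ys unfolding orthonormal_def by blast
    next
      case 3 thus ?thesis using orth[of u w] disj[of u w] by simp
    next
      case 4 thus ?thesis using orth'[of w u] disj[of w u] by simp
    qed
  qed
qed

lemma mat_of_cols_transpose_mult_vec_index:
  assumes "set us \<subseteq> carrier_vec n" "i < length us"
  shows "((mat_of_cols n us)\<^sup>T *\<^sub>v y) $ i = us ! i \<bullet> y"
proof -
  have "us ! i \<in> carrier_vec n" using assms nth_mem by blast
  thus ?thesis using assms by (simp add: col_mat_of_cols)
qed

lemma mat_of_cols_gram_index: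
  assumes "set us \<subseteq> carrier_vec n" "set ws \<subseteq> carrier_vec n" "i < length us" "j < length ws"
  shows "((mat_of_cols n us)\<^sup>T * mat_of_cols n ws) $$ (i,j) = us ! i \<bullet> ws ! j"
proof -
  have "us ! i \<in> carrier_vec n" "ws ! j \<in> carrier_vec n" using assms nth_mem by blast+
  thus ?thesis using assms by (simp add: col_mat_of_cols)
qed

lemma mat_of_cols_transpose_mult_vec_eq_0_iff:
  assumes "set us \<subseteq> carrier_vec n"
  shows "(mat_of_cols n us)\<^sup>T *\<^sub>v y = 0\<^sub>v (length us) \<longleftrightarrow> (\<forall>u\<in>set us. u \<bullet> y = 0)"
proof -
  have "(mat_of_cols n us)\<^sup>T *\<^sub>v y = 0\<^sub>v (length us) \<longleftrightarrow> (\<forall>i<length us. us ! i \<bullet> y = 0)"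
    using mat_of_cols_transpose_mult_vec_index[OF assms] by (auto simp: vec_eq_iff)
  thus ?thesis by (metis in_set_conv_nth)
qed

lemma orthonormal_gram:
  assumes "orthonormal n us"
  shows "(mat_of_cols n us)\<^sup>T * mat_of_cols n us = 1\<^sub>m (length us)"
proof (rule eq_matI)
  fix i j assume "i < dim_row (1\<^sub>m (length us) :: real mat)" "j < dim_col (1\<^sub>m (length us) :: real mat)"
  hence ij: "i < length us" "j < length us" by auto
  have "us ! i = us ! j \<longleftrightarrow> i = j" using orthonormalD(2)[OF assms] ij by (simp add: nth_eq_iff_index_eq)
  thus "((mat_of_cols n us)\<^sup>T * mat_of_cols n us) $$ (i,j) = 1\<^sub>m (length us) $$ (i,j)"
    using assms ij mat_of_cols_gram_index[of us n us i j] unfolding orthonormal_def by auto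
qed auto

lemma orthonormal_cols:
  assumes X: "X \<in> carrier_mat n p" and XX: "X\<^sup>T * X = 1\<^sub>m p"
  shows "orthonormal n (cols X)"
proof -
  have e: "col X i \<bullet> col X j = (if i = j then 1 else 0)" if "i < p" "j < p" for i j
  proof -
    have "(X\<^sup>T * X) $$ (i,j) = col X i \<bullet> col X j" using X that by simp
    thus ?thesis using XX that by simp
  qed
  have inj: "col X i = col X j \<longleftrightarrow> i = j" if "i < p" "j < p" for i j
    using e[OF that] e[of i i] that by (cases "i = j") auto
  have "distinct (cols X)" using X inj by (simp add: distinct_conv_nth)
  moreover have "set (cols X) \<subseteq> carrier_vec n" using X by (auto simp: cols_def)
  moreover have "u \<bullet> w = (if u = w then 1 else 0)"
    if u: "u \<in> set (cols X)" and w: "w \<in> set (cols X)" for u w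
  proof -
    obtain i where "i < p" "u = col X i" using X u by (auto simp: cols_def)
    moreover obtain j where "j < p" "w = col X j" using X w by (auto simp: cols_def)
    ultimately show ?thesis using e inj by simp
  qed
  ultimately show ?thesis unfolding orthonormal_def by blast
qed

lemma orthogonal_mat_right_inverse:
  fixes U :: "real mat"
  assumes "U \<in> carrier_mat n n" "U\<^sup>T * U = 1\<^sub>m n"
  shows "U * U\<^sup>T = 1\<^sub>m n"
  using mat_mult_left_right_inverse[of "U\<^sup>T" n U] assms by simp

lemma orthogonal_mat_inj_on_cols:
  fixes U :: "real mat"
  assumes "U \<in> carrier_mat m p" "U\<^sup>T * U = 1\<^sub>m p"
  shows "inj_on (col U) {..<p}"
  using orthonormalD(2)[OF orthonormal_cols[OF assms]] assms(1)
  by (auto simp: inj_on_def cols_def distinct_map)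

lemma orthonormal_length_le:
  assumes "orthonormal n us"
  shows "length us \<le> n"
proof (rule ccontr)
  let ?U = "mat_of_cols n us"
  assume "\<not> ?thesis"
  hence "n < length us" by simp
  then obtain x where x: "x \<in> carrier_vec (length us)" "x \<noteq> 0\<^sub>v (length us)" "?U *\<^sub>v x = 0\<^sub>v n"
    using nonzero_kernel_vec_exists[OF mat_of_cols_carrier(1)] by blast
  have "x = (?U\<^sup>T * ?U) *\<^sub>v x" using orthonormal_gram[OF assms] x(1) by simp
  also have "\<dots> = ?U\<^sup>T *\<^sub>v (?U *\<^sub>v x)" using x(1) by (intro assoc_mult_mat_vec) auto
  finally show False using x by (simp add: mult_mat_vec_zero)
qed

lemma orthonormal_lin_indpt:
  assumes on: "orthonormal n us"
  shows "LinearCombinations.module.lin_indpt class_ring (module_vec TYPE(real) n) (set us)"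
proof -
  interpret vec_space "TYPE(real)" n .
  have carr: "set us \<subseteq> carrier_vec n" using orthonormalD(1)[OF on] .
  show ?thesis
  proof (rule finite_lin_indpt2, goal_cases)
    case 1 show ?case by simp
  next
    case 2 show ?case using carr by auto
  next
    case (3 a)
    have "a u = 0" if u: "u \<in> set us" for u
    proof -
      have uc: "u \<in> carrier_vec n" using u carr by auto
      have f: "(\<lambda>v. a v \<cdot>\<^sub>v v) \<in> set us \<rightarrow> carrier_vec n" using carr by auto
      have "lincomb a (set us) \<bullet> u = (\<Sum>v\<in>set us. (a v \<cdot>\<^sub>v v) \<bullet> u)"
        unfolding lincomb_def by (rule finsum_scalar_prod_sum[OF f uc])
      also have "\<dots> = (\<Sum>v\<in>set us. a v * (v \<bullet> u))"
        by (intro sum.cong refl) (use carr uc in \<open>auto intro!: smult_scalar_prod_distrib\<close>)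
      also have "\<dots> = (\<Sum>v\<in>set us. if v = u then a v else 0)"
        by (intro sum.cong refl) (use orthonormalD(3,4)[OF on] u in auto)
      also have "\<dots> = a u" using u by simp
      finally have "a u = lincomb a (set us) \<bullet> u" by simp
      also have "\<dots> = 0" using 3(2) uc by simp
      finally show "a u = 0" by simp
    qed
    thus ?case by (simp add: class_ring_simps)
  qed
qed

lemma basis_of_orthonormal:
  assumes on: "orthonormal n ws" and span: "Col (mat_of_cols n ws) = W"
  shows "basis_of n W (set ws)"
  unfolding basis_of_def
  using set_subset_Col_mat_of_cols[OF orthonormalD(1)[OF on]] orthonormal_lin_indpt[OF on]
    span_eq_Col_mat_of_cols[OF orthonormalD(1)[OF on]] span by simp

lemma orthonormal_map_upt:
  assumes carr: "\<And>i. i < p \<Longrightarrow> u i \<in> carrier_vec n"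
    and inner: "\<And>i j. i < p \<Longrightarrow> j < p \<Longrightarrow> u i \<bullet> u j = (if i = j then 1 else 0)"
  shows "orthonormal n (map u [0..<p])"
proof -
  have inj: "inj_on u {..<p}"
    using inner by (intro inj_onI) (metis lessThan_iff zero_neq_one)
  show ?thesis unfolding orthonormal_def
  proof (intro conjI ballI)
    show "set (map u [0..<p]) \<subseteq> carrier_vec n" using carr by auto
    show "distinct (map u [0..<p])" using inj by (simp add: distinct_map lessThan_atLeast0)
    fix v w assume "v \<in> set (map u [0..<p])" "w \<in> set (map u [0..<p])"
    then obtain i j where "i < p" "j < p" "v = u i" "w = u j" by auto
    thus "v \<bullet> w = (if v = w then 1 else 0)" using inner inj by (auto simp: inj_on_def)
  qed
qed

lemma orthonormal_map_isometry:
  fixes Z :: "real mat"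
  assumes Z: "Z \<in> carrier_mat n p" and ZZ: "Z\<^sup>T * Z = 1\<^sub>m p" and on: "orthonormal p qs"
  shows "orthonormal n (map ((*\<^sub>v) Z) qs)"
proof -
  have ZT: "Z\<^sup>T \<in> carrier_mat p n" using Z by simp
  have carr: "set qs \<subseteq> carrier_vec p" using orthonormalD(1)[OF on] .
  have inner: "(Z *\<^sub>v a) \<bullet> (Z *\<^sub>v b) = a \<bullet> b" if "a \<in> carrier_vec p" "b \<in> carrier_vec p" for a b
  proof -
    have "(Z *\<^sub>v a) \<bullet> (Z *\<^sub>v b) = (Z\<^sup>T *\<^sub>v (Z *\<^sub>v a)) \<bullet> b"
      using transpose_vec_mult_scalar[OF Z that(2) mult_mat_vec_carrier[OF Z that(1)]] by simp
    also have "Z\<^sup>T *\<^sub>v (Z *\<^sub>v a) = a" using assoc_mult_mat_vec[OF ZT Z that(1)] ZZ that(1) by simp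
    finally show ?thesis .
  qed
  have inj: "inj_on ((*\<^sub>v) Z) (set qs)"
  proof (rule inj_onI)
    fix a b assume ab: "a \<in> set qs" "b \<in> set qs" "Z *\<^sub>v a = Z *\<^sub>v b"
    hence "a \<bullet> b = a \<bullet> a" using inner carr by (metis subsetD)
    thus "a = b" using orthonormalD(3,4)[OF on] ab(1,2) by (cases "a = b") auto
  qed
  show ?thesis unfolding orthonormal_def
  proof (intro conjI ballI)
    show "set (map ((*\<^sub>v) Z) qs) \<subseteq> carrier_vec n" using carr Z by auto
    show "distinct (map ((*\<^sub>v) Z) qs)" using inj orthonormalD(2)[OF on] by (simp add: distinct_map)
    fix u w assume "u \<in> set (map ((*\<^sub>v) Z) qs)" "w \<in> set (map ((*\<^sub>v) Z) qs)"
    then obtain a b where ab: "a \<in> set qs" "b \<in> set qs" and uw: "u = Z *\<^sub>v a" "w = Z *\<^sub>v b"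
      by auto
    have "u \<bullet> w = a \<bullet> b" using inner ab carr uw by auto
    moreover have "u = w \<longleftrightarrow> a = b" using inj ab uw by (auto simp: inj_on_def)
    ultimately show "u \<bullet> w = (if u = w then 1 else 0)" using on ab unfolding orthonormal_def by simp
  qed
qed

lemma mat_of_cols_transpose_mult_zero:
  assumes on: "orthonormal n (xs @ ys)"
  shows "(mat_of_cols n xs)\<^sup>T * mat_of_cols n ys = 0\<^sub>m (length xs) (length ys)"
proof (rule eq_matI)
  fix i j assume "i < dim_row (0\<^sub>m (length xs) (length ys) :: real mat)"
    "j < dim_col (0\<^sub>m (length xs) (length ys) :: real mat)"
  hence ij: "i < length xs" "j < length ys" by auto
  have "xs ! i \<noteq> ys ! j" using orthonormalD(2)[OF on] ij by (auto dest: nth_mem)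
  hence "xs ! i \<bullet> ys ! j = 0" using orthonormalD(4)[OF on] ij by simp
  thus "((mat_of_cols n xs)\<^sup>T * mat_of_cols n ys) $$ (i, j) = 0\<^sub>m (length xs) (length ys) $$ (i, j)"
    using mat_of_cols_gram_index[of xs n ys i j] orthonormalD(1)[OF on] ij by simp
qed auto

lemma Col_orthogonal:
  assumes on: "orthonormal n (xs @ ys)"
    and a: "a \<in> Col (mat_of_cols n xs)" and b: "b \<in> Col (mat_of_cols n ys)"
  shows "a \<bullet> b = 0"
proof -
  let ?X = "mat_of_cols n xs" and ?Y = "mat_of_cols n ys"
  have X: "?X \<in> carrier_mat n (length xs)" and Y: "?Y \<in> carrier_mat n (length ys)" by auto
  have XT: "?X\<^sup>T \<in> carrier_mat (length xs) n" by simp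
  obtain c where c: "c \<in> carrier_vec (length xs)" "a = ?X *\<^sub>v c" using ColE[OF X a] by blast
  obtain d where d: "d \<in> carrier_vec (length ys)" "b = ?Y *\<^sub>v d" using ColE[OF Y b] by blast
  have Yd: "?Y *\<^sub>v d \<in> carrier_vec n" by (rule mult_mat_vec_carrier[OF Y d(1)])
  have Xc: "?X *\<^sub>v c \<in> carrier_vec n" by (rule mult_mat_vec_carrier[OF X c(1)])
  have "a \<bullet> b = b \<bullet> a" using comm_scalar_prod[OF Xc Yd] c d by simp
  also have "\<dots> = (?X\<^sup>T *\<^sub>v b) \<bullet> c" using transpose_vec_mult_scalar[OF X c(1), of b] Yd c d by simp
  also have "?X\<^sup>T *\<^sub>v b = (?X\<^sup>T * ?Y) *\<^sub>v d" using assoc_mult_mat_vec[OF XT Y d(1)] d(2) by simp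
  also have "\<dots> = 0\<^sub>m (length xs) (length ys) *\<^sub>v d" unfolding mat_of_cols_transpose_mult_zero[OF on] ..
  also have "\<dots> = 0\<^sub>v (length xs)" using d(1) by (intro eq_vecI) (auto simp: scalar_prod_def)
  finally show ?thesis using c(1) by simp
qed

lemma orthonormal_projection_residual:
  assumes on: "orthonormal n us" and x: "x \<in> carrier_vec n"
  defines "U \<equiv> mat_of_cols n us"
  shows "U\<^sup>T *\<^sub>v (x - U *\<^sub>v (U\<^sup>T *\<^sub>v x)) = 0\<^sub>v (length us)"
proof -
  have U: "U \<in> carrier_mat n (length us)" and UT: "U\<^sup>T \<in> carrier_mat (length us) n"
    unfolding U_def by auto
  have c: "U\<^sup>T *\<^sub>v x \<in> carrier_vec (length us)" using UT x by simp
  have "U\<^sup>T *\<^sub>v (x - U *\<^sub>v (U\<^sup>T *\<^sub>v x)) = U\<^sup>T *\<^sub>v x - U\<^sup>T *\<^sub>v (U *\<^sub>v (U\<^sup>T *\<^sub>v x))"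
    using U UT x c by (intro mult_minus_distrib_mat_vec) auto
  also have "U\<^sup>T *\<^sub>v (U *\<^sub>v (U\<^sup>T *\<^sub>v x)) = (U\<^sup>T * U) *\<^sub>v (U\<^sup>T *\<^sub>v x)"
    using U UT c by (intro assoc_mult_mat_vec[symmetric]) auto
  also have "\<dots> = U\<^sup>T *\<^sub>v x" using orthonormal_gram[OF on, folded U_def] c by simp
  finally show ?thesis using c by simp
qed

lemma orthonormal_basis_orthogonal_eq_0:
  assumes on: "orthonormal n vs" and len: "length vs = n" and x: "x \<in> carrier_vec n"
    and orth: "\<forall>v\<in>set vs. v \<bullet> x = 0"
  shows "x = 0\<^sub>v n"
proof -
  let ?V = "mat_of_cols n vs"
  have V: "?V \<in> carrier_mat n n" using len by auto
  have "?V * ?V\<^sup>T = 1\<^sub>m n"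
    using orthogonal_mat_right_inverse[OF V] orthonormal_gram[OF on] len by simp
  hence "x = (?V * ?V\<^sup>T) *\<^sub>v x" using x by simp
  also have "\<dots> = ?V *\<^sub>v (?V\<^sup>T *\<^sub>v x)" using V x by (intro assoc_mult_mat_vec) auto
  also have "?V\<^sup>T *\<^sub>v x = 0\<^sub>v n"
    using mat_of_cols_transpose_mult_vec_eq_0_iff[OF orthonormalD(1)[OF on]] orth len by simp
  finally show ?thesis using V by (simp add: mult_mat_vec_zero)
qed

lemma orthonormal_basis_expansion:
  assumes on: "orthonormal n (ys @ zs)" and len: "length (ys @ zs) = n" and x: "x \<in> carrier_vec n"
    and orth: "\<forall>y\<in>set ys. y \<bullet> x = 0"
  shows "x = mat_of_cols n zs *\<^sub>v ((mat_of_cols n zs)\<^sup>T *\<^sub>v x)"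
proof -
  let ?Z = "mat_of_cols n zs"
  have zs: "orthonormal n zs" using orthonormal_subset[OF on] orthonormalD(2)[OF on] by auto
  have carr: "set ys \<subseteq> carrier_vec n" "set zs \<subseteq> carrier_vec n" using orthonormalD(1)[OF on] by auto
  have Z: "?Z \<in> carrier_mat n (length zs)" and ZT: "?Z\<^sup>T \<in> carrier_mat (length zs) n" by auto
  define c where "c = ?Z\<^sup>T *\<^sub>v x"
  have c: "c \<in> carrier_vec (length zs)" unfolding c_def by (rule mult_mat_vec_carrier[OF ZT x])
  define d where "d = x - ?Z *\<^sub>v c"
  have Zc: "?Z *\<^sub>v c \<in> carrier_vec n" by (rule mult_mat_vec_carrier[OF Z c])
  have d: "d \<in> carrier_vec n" unfolding d_def using x Zc by simp
  have "?Z\<^sup>T *\<^sub>v d = 0\<^sub>v (length zs)"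
    unfolding d_def c_def by (rule orthonormal_projection_residual[OF zs x])
  hence dz: "\<forall>z\<in>set zs. z \<bullet> d = 0" using mat_of_cols_transpose_mult_vec_eq_0_iff[OF carr(2)] by simp
  have dy: "\<forall>y\<in>set ys. y \<bullet> d = 0"
  proof
    fix y assume y: "y \<in> set ys"
    have yc: "y \<in> carrier_vec n" using y carr by auto
    have "z \<bullet> y = 0" if z: "z \<in> set zs" for z
    proof -
      have "z \<noteq> y" using y z orthonormalD(2)[OF on] by auto
      thus ?thesis using orthonormalD(4)[OF on, of z y] y z by simp
    qed
    hence "?Z\<^sup>T *\<^sub>v y = 0\<^sub>v (length zs)" using mat_of_cols_transpose_mult_vec_eq_0_iff[OF carr(2)] by simp
    hence "y \<bullet> (?Z *\<^sub>v c) = 0" using transpose_vec_mult_scalar[OF Z c yc] c by simp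
    moreover have "y \<bullet> d = y \<bullet> x - y \<bullet> (?Z *\<^sub>v c)"
      unfolding d_def by (rule scalar_prod_minus_distrib[OF yc x Zc])
    ultimately show "y \<bullet> d = 0" using orth y by simp
  qed
  have "d = 0\<^sub>v n" using orthonormal_basis_orthogonal_eq_0[OF on len d] dy dz by auto
  hence "x - ?Z *\<^sub>v c = 0\<^sub>v n" unfolding d_def .
  hence "x = ?Z *\<^sub>v c" using minus_vec_eq_0_iff[OF x Zc] by simp
  thus ?thesis unfolding c_def .
qed

lemma orthonormal_Col_expansion:
  assumes on: "orthonormal n ws" and x: "x \<in> Col (mat_of_cols n ws)"
  shows "x = mat_of_cols n ws *\<^sub>v ((mat_of_cols n ws)\<^sup>T *\<^sub>v x)"
proof -
  let ?W = "mat_of_cols n ws"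
  obtain c where c: "c \<in> carrier_vec (length ws)" "x = ?W *\<^sub>v c"
    using x mat_of_cols_carrier(1) by (blast elim: ColE)
  have W: "?W \<in> carrier_mat n (length ws)" and WT: "?W\<^sup>T \<in> carrier_mat (length ws) n" by auto
  have "?W\<^sup>T *\<^sub>v x = (?W\<^sup>T * ?W) *\<^sub>v c" using c(2) assoc_mult_mat_vec[OF WT W c(1)] by simp
  thus ?thesis using orthonormal_gram[OF on] c by simp
qed

lemma orthogonal_mat_in_span_cols:
  fixes U :: "real mat"
  assumes U: "U \<in> carrier_mat m m" and UU: "U\<^sup>T * U = 1\<^sub>m m"
    and J: "J \<subseteq> {..<m}" and x: "x \<in> carrier_vec m"
    and orth: "\<forall>j<m. j \<notin> J \<longrightarrow> col U j \<bullet> x = 0"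
  shows "x \<in> LinearCombinations.module.span class_ring (module_vec TYPE(real) m) (col U ` J)"
proof -
  define ys where "ys = map (col U) (filter (\<lambda>j. j \<notin> J) [0..<m])"
  define zs where "zs = map (col U) (filter (\<lambda>j. j \<in> J) [0..<m])"
  have on: "orthonormal m (cols U)" by (rule orthonormal_cols[OF U UU])
  have inj: "inj_on (col U) {..<m}" by (rule orthogonal_mat_inj_on_cols[OF U UU])
  have set: "set (ys @ zs) = set (cols U)" using U unfolding ys_def zs_def cols_def by auto
  have "distinct (filter (\<lambda>j. j \<notin> J) [0..<m] @ filter (\<lambda>j. j \<in> J) [0..<m])" by auto
  moreover have "inj_on (col U) (set (filter (\<lambda>j. j \<notin> J) [0..<m] @ filter (\<lambda>j. j \<in> J) [0..<m]))"
    by (rule inj_on_subset[OF inj]) auto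
  ultimately have "distinct (ys @ zs)"
    unfolding ys_def zs_def map_append[symmetric] distinct_map by blast
  hence on': "orthonormal m (ys @ zs)" using orthonormal_subset[OF on] set by simp
  have "length (ys @ zs) = m"
    using distinct_card[OF \<open>distinct (ys @ zs)\<close>] distinct_card[OF orthonormalD(2)[OF on]] set U by simp
  moreover have "\<forall>y\<in>set ys. y \<bullet> x = 0" using orth unfolding ys_def by auto
  ultimately have "x = mat_of_cols m zs *\<^sub>v ((mat_of_cols m zs)\<^sup>T *\<^sub>v x)"
    by (rule orthonormal_basis_expansion[OF on' _ x])
  moreover have "(mat_of_cols m zs)\<^sup>T *\<^sub>v x \<in> carrier_vec (length zs)"
    using x by (intro mult_mat_vec_carrier[of _ _ m]) simp_all
  ultimately have "x \<in> Col (mat_of_cols m zs)"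
    using mult_mat_vec_in_Col[OF mat_of_cols_carrier(1)] by metis
  moreover have "set zs = col U ` J" unfolding zs_def using J by auto
  moreover have "set zs \<subseteq> carrier_vec m" unfolding zs_def using U by auto
  ultimately show ?thesis using span_eq_Col_mat_of_cols[of zs m] by simp
qed

lemma orthonormal_snoc:
  assumes on: "orthonormal n us" and w: "w \<in> carrier_vec n" "w \<noteq> 0\<^sub>v n"
    and orth: "(mat_of_cols n us)\<^sup>T *\<^sub>v w = 0\<^sub>v (length us)"
  shows "orthonormal n (us @ [(1 / sqrt (w \<bullet> w)) \<cdot>\<^sub>v w])"
proof (rule orthonormal_append[OF on])
  show "orthonormal n [(1 / sqrt (w \<bullet> w)) \<cdot>\<^sub>v w]"
    using normalized_vec[OF w] w by (simp add: orthonormal_def)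
  fix u y assume u: "u \<in> set us" and y: "y \<in> set [(1 / sqrt (w \<bullet> w)) \<cdot>\<^sub>v w]"
  have "u \<in> carrier_vec n" using u orthonormalD(1)[OF on] by auto
  moreover have "u \<bullet> w = 0"
    using orth u mat_of_cols_transpose_mult_vec_eq_0_iff[OF orthonormalD(1)[OF on]] by blast
  ultimately show "u \<bullet> y = 0" using y w by simp
qed

lemma orthonormal_extend_to_basis_of_Col:
  assumes F: "F \<in> carrier_mat n q" and on: "orthonormal n us" and sub: "set us \<subseteq> Col F"
  shows "\<exists>zs. orthonormal n (us @ zs) \<and> Col (mat_of_cols n (us @ zs)) = Col F"
  using on sub
proof (induction "n - length us" arbitrary: us rule: less_induct)
  case less
  let ?U = "mat_of_cols n us"
  have U: "?U \<in> carrier_mat n (length us)" by simp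
  have UF: "Col ?U \<subseteq> Col F" using less.prems(2) orthonormalD(1)[OF less.prems(1)]
    by (intro Col_mono[OF F U]) (simp add: cols_mat_of_cols)
  show ?case
  proof (cases "Col F \<subseteq> Col ?U")
    case True
    have "Col ?U = Col F" using UF True by (rule subset_antisym)
    hence "Col (mat_of_cols n (us @ [])) = Col F" by simp
    thus ?thesis using less.prems(1) by (intro exI[of _ "[]"]) simp
  next
    case False
    then obtain x where xF: "x \<in> Col F" and xU: "x \<notin> Col ?U" by auto
    have x: "x \<in> carrier_vec n" using xF Col_carrier[OF F] by auto
    define w where "w = x - ?U *\<^sub>v (?U\<^sup>T *\<^sub>v x)"
    have UT: "?U\<^sup>T \<in> carrier_mat (length us) n" by simp
    have UUx: "?U *\<^sub>v (?U\<^sup>T *\<^sub>v x) \<in> Col ?U"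
      by (rule mult_mat_vec_in_Col[OF U mult_mat_vec_carrier[OF UT x]])
    have UUx': "?U *\<^sub>v (?U\<^sup>T *\<^sub>v x) \<in> carrier_vec n" using UUx Col_carrier[OF U] by blast
    have w: "w \<in> carrier_vec n" unfolding w_def by (rule minus_carrier_vec[OF x UUx'])
    have "w \<noteq> 0\<^sub>v n"
    proof
      assume "w = 0\<^sub>v n"
      hence "?U *\<^sub>v (?U\<^sup>T *\<^sub>v x) = x" using minus_vec_eq_0_iff[OF x UUx'] unfolding w_def by simp
      thus False using xU UUx by simp
    qed
    moreover have "?U\<^sup>T *\<^sub>v w = 0\<^sub>v (length us)"
      unfolding w_def by (rule orthonormal_projection_residual[OF less.prems(1) x])
    ultimately have on': "orthonormal n (us @ [(1 / sqrt (w \<bullet> w)) \<cdot>\<^sub>v w])"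
      using orthonormal_snoc[OF less.prems(1) w] by blast
    have "w \<in> Col F" unfolding w_def using Col_minus[OF F xF] UUx UF by blast
    hence sub': "set (us @ [(1 / sqrt (w \<bullet> w)) \<cdot>\<^sub>v w]) \<subseteq> Col F"
      using less.prems(2) Col_smult[OF F, of w] by simp
    have "n - length (us @ [(1 / sqrt (w \<bullet> w)) \<cdot>\<^sub>v w]) < n - length us"
      using orthonormal_length_le[OF on'] by simp
    from less.hyps[OF this on' sub'] obtain zs where
      "orthonormal n ((us @ [(1 / sqrt (w \<bullet> w)) \<cdot>\<^sub>v w]) @ zs)"
      "Col (mat_of_cols n ((us @ [(1 / sqrt (w \<bullet> w)) \<cdot>\<^sub>v w]) @ zs)) = Col F"
      by blast
    thus ?thesis by (intro exI[of _ "(1 / sqrt (w \<bullet> w)) \<cdot>\<^sub>v w # zs"]) simp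
  qed
qed

lemma orthonormal_basis_of_Col:
  assumes "F \<in> carrier_mat n q"
  obtains ws where "orthonormal n ws" "Col (mat_of_cols n ws) = Col F"
proof -
  have "orthonormal n []" by (simp add: orthonormal_def)
  thus ?thesis using orthonormal_extend_to_basis_of_Col[OF assms, of "[]"] that by auto
qed

lemma orthonormal_extend_to_basis:
  assumes on: "orthonormal n us"
  obtains zs where "orthonormal n (us @ zs)" "length (us @ zs) = n"
proof -
  have "set us \<subseteq> Col (1\<^sub>m n)" using orthonormalD(1)[OF on] Col_one_mat by simp
  from orthonormal_extend_to_basis_of_Col[OF one_carrier_mat on this] Col_one_mat
  obtain zs where on': "orthonormal n (us @ zs)" and span: "Col (mat_of_cols n (us @ zs)) = carrier_vec n"
    by auto
  let ?W = "mat_of_cols n (us @ zs)"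
  have "\<not> length (us @ zs) < n"
  proof
    assume lt: "length (us @ zs) < n"
    have "?W\<^sup>T \<in> carrier_mat (length (us @ zs)) n"
      using transpose_carrier_mat mat_of_cols_carrier(1) by blast
    from nonzero_kernel_vec_exists[OF this lt]
    obtain x where x: "x \<in> carrier_vec n" "x \<noteq> 0\<^sub>v n" and Wx: "?W\<^sup>T *\<^sub>v x = 0\<^sub>v (length (us @ zs))" .
    have "x = ?W *\<^sub>v (?W\<^sup>T *\<^sub>v x)" using orthonormal_Col_expansion[OF on'] span x by blast
    also have "\<dots> = 0\<^sub>v n" unfolding Wx by (rule mult_mat_vec_zero[OF mat_of_cols_carrier(1)])
    finally show False using x by simp
  qed
  thus ?thesis using that on' orthonormal_length_le[OF on'] by simp
qed

section \<open>Rank and bases of column spaces\<close>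

lemma (in vec_space) dim_span_eq_card:
  assumes S: "S \<subseteq> carrier_vec n" and T: "T \<subseteq> carrier_vec n" and fin: "finite T"
    and li: "lin_indpt T" and sp: "span T = span S"
  shows "vectorspace.dim class_ring (span_vs S) = card T"
proof -
  have sub: "submodule class_ring (span S) V" using span_is_submodule S by simp
  have vs: "vectorspace class_ring (span_vs S)"
    using field.field_axioms vectorspace_def submodule_is_module[OF sub] by metis
  have "T \<subseteq> span S" using in_own_span[OF T] sp by simp
  hence "vectorspace.basis class_ring (span_vs S) T"
    using vectorspace.basis_def[OF vs] span_li_not_depend[OF _ sub] li sp by simp
  thus ?thesis using vectorspace.dim_basis[OF vs fin] by simp
qed

lemma card_basis_of_Col:
  assumes E: "E \<in> carrier_mat m n" and B: "basis_of m (Col E) S"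
  shows "card S = mat_rank E"
proof -
  interpret vec_space "TYPE(real)" m .
  have cE: "set (cols E) \<subseteq> carrier_vec m" using E by (auto simp: cols_def)
  have "Col E = span (set (cols E))" unfolding Col_def using E by (simp add: col_space_def)
  hence "vectorspace.dim class_ring (span_vs (set (cols E))) = card S"
    using dim_span_eq_card[OF cE] B Col_carrier[OF E] unfolding basis_of_def by auto
  thus ?thesis unfolding mat_rank_def using E by (simp add: rank_def)
qed

lemma basis_of_Col_orthogonal_mat_cols:
  fixes E U :: "real mat"
  assumes E: "E \<in> carrier_mat m n" and U: "U \<in> carrier_mat m m" and UU: "U\<^sup>T * U = 1\<^sub>m m"
    and I: "I \<subseteq> {..<m}" and sub: "col U ` I \<subseteq> Col E"
    and orth: "\<forall>j<m. j \<notin> I \<longrightarrow> E\<^sup>T *\<^sub>v col U j = 0\<^sub>v n"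
  shows "basis_of m (Col E) (col U ` I)"
proof -
  define ts where "ts = map (col U) (filter (\<lambda>j. j \<in> I) [0..<m])"
  have set_ts: "set ts = col U ` I" unfolding ts_def using I by auto
  have "inj_on (col U) (set (filter (\<lambda>j. j \<in> I) [0..<m]))"
    by (rule inj_on_subset[OF orthogonal_mat_inj_on_cols[OF U UU]]) auto
  hence "distinct ts" unfolding ts_def distinct_map by simp
  moreover have "set ts \<subseteq> set (cols U)" unfolding ts_def using U by (auto simp: cols_def)
  ultimately have on: "orthonormal m ts" by (rule orthonormal_subset[OF orthonormal_cols[OF U UU], rotated])
  have ts_carr: "set ts \<subseteq> carrier_vec m" using orthonormalD(1)[OF on] .
  have "set (cols (mat_of_cols m ts)) \<subseteq> Col E" using cols_mat_of_cols[OF ts_carr] set_ts sub by simp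
  hence "Col (mat_of_cols m ts) \<subseteq> Col E" by (rule Col_mono[OF E mat_of_cols_carrier(1)])
  moreover have "Col E \<subseteq> Col (mat_of_cols m ts)"
  proof
    fix y assume y: "y \<in> Col E"
    then obtain x where x: "x \<in> carrier_vec n" "y = E *\<^sub>v x" using ColE[OF E] by blast
    have yc: "y \<in> carrier_vec m" using x E by simp
    have "\<forall>j<m. j \<notin> I \<longrightarrow> col U j \<bullet> y = 0"
    proof (intro allI impI)
      fix j assume j: "j < m" "j \<notin> I"
      have "col U j \<in> carrier_vec m" using U j by simp
      hence "col U j \<bullet> y = (E\<^sup>T *\<^sub>v col U j) \<bullet> x" using transpose_vec_mult_scalar[OF E x(1)] x(2) by simp
      thus "col U j \<bullet> y = 0" using orth j x(1) by simp
    qed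
    from orthogonal_mat_in_span_cols[OF U UU I yc this]
    show "y \<in> Col (mat_of_cols m ts)" using span_eq_Col_mat_of_cols[OF ts_carr] set_ts by simp
  qed
  ultimately have "Col (mat_of_cols m ts) = Col E" by (rule subset_antisym)
  from basis_of_orthonormal[OF on this] show ?thesis unfolding set_ts .
qed

section \<open>Spectral theorem for real symmetric matrices\<close>

lemma smult_eigenvector:
  fixes G :: "real mat"
  assumes "G \<in> carrier_mat n n" "y \<in> carrier_vec n" "G *\<^sub>v y = \<mu> \<cdot>\<^sub>v y"
  shows "G *\<^sub>v (a \<cdot>\<^sub>v y) = \<mu> \<cdot>\<^sub>v (a \<cdot>\<^sub>v y)"
  using mult_mat_vec[OF assms(1,2), of a] assms(3) by (simp add: smult_smult_assoc mult.commute)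

lemma intertwined_eigenvectors:
  fixes C W G :: "real mat"
  assumes C: "C \<in> carrier_mat r r" and W: "W \<in> carrier_mat r p" and G: "G \<in> carrier_mat p p"
    and CW: "C * W = W * G" and qs: "set qs \<subseteq> carrier_vec p"
    and eig: "\<forall>q\<in>set qs. \<exists>\<mu>. G *\<^sub>v q = \<mu> \<cdot>\<^sub>v q"
  shows "\<forall>v\<in>set (map ((*\<^sub>v) W) qs). \<exists>\<mu>. C *\<^sub>v v = \<mu> \<cdot>\<^sub>v v"
proof
  fix v assume "v \<in> set (map ((*\<^sub>v) W) qs)"
  then obtain q where q: "q \<in> set qs" "v = W *\<^sub>v q" by auto
  then obtain \<mu> where Gq: "G *\<^sub>v q = \<mu> \<cdot>\<^sub>v q" using eig by blast
  have qc: "q \<in> carrier_vec p" using q(1) qs by auto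
  have "C *\<^sub>v (W *\<^sub>v q) = (C * W) *\<^sub>v q" by (rule assoc_mult_mat_vec[symmetric, OF C W qc])
  also have "\<dots> = W *\<^sub>v (G *\<^sub>v q)" unfolding CW by (rule assoc_mult_mat_vec[OF W G qc])
  finally have "C *\<^sub>v v = \<mu> \<cdot>\<^sub>v v" using Gq mult_mat_vec[OF W qc] q(2) by simp
  thus "\<exists>\<mu>. C *\<^sub>v v = \<mu> \<cdot>\<^sub>v v" by blast
qed

lemma symmetric_mat_compression:
  fixes M W :: "real mat"
  assumes M: "M \<in> carrier_mat n n" and sym: "M\<^sup>T = M" and W: "W \<in> carrier_mat n p"
  shows "(W\<^sup>T * (M * W))\<^sup>T = W\<^sup>T * (M * W)"
proof -
  have WT: "W\<^sup>T \<in> carrier_mat p n" and MW: "M * W \<in> carrier_mat n p" using M W by auto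
  have "(W\<^sup>T * (M * W))\<^sup>T = (M * W)\<^sup>T * W" using transpose_mult[OF WT MW] by simp
  also have "\<dots> = W\<^sup>T * M * W" using transpose_mult[OF M W] sym by simp
  also have "\<dots> = W\<^sup>T * (M * W)" by (rule assoc_mult_mat[OF WT M W])
  finally show ?thesis .
qed

lemma symmetric_mat_scalar_prod:
  fixes M :: "real mat"
  assumes M: "M \<in> carrier_mat n n" and sym: "M\<^sup>T = M" and x: "x \<in> carrier_vec n" and y: "y \<in> carrier_vec n"
  shows "x \<bullet> (M *\<^sub>v y) = (M *\<^sub>v x) \<bullet> y"
  using transpose_vec_mult_scalar[OF M y x] sym by simp

lemma complex_mat_eigenvector_exists:
  fixes C :: "complex mat"
  assumes C: "C \<in> carrier_mat r r" and r: "0 < r"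
  obtains a u where "u \<in> carrier_vec r" "u \<noteq> 0\<^sub>v r" "C *\<^sub>v u = a \<cdot>\<^sub>v u"
proof -
  obtain as where cp: "char_poly C = (\<Prod>a\<leftarrow>as. [:- a, 1:])"
    using char_poly_factorized[OF C] by auto
  have "degree (char_poly C) = r" using degree_monic_char_poly[OF C] by auto
  then obtain a as' where "as = a # as'" using r cp by (cases as) auto
  hence "poly (char_poly C) a = 0" unfolding cp by simp
  hence "eigenvalue C a" using eigenvalue_root_char_poly[OF C] by simp
  then obtain u where "eigenvector C u a" unfolding eigenvalue_def by auto
  thus ?thesis using that C unfolding eigenvector_def by auto
qed

lemma real_symmetric_mat_complex_eigenvalue_real:
  fixes C :: "real mat" and u :: "complex vec"
  assumes C: "C \<in> carrier_mat r r" and sym: "C\<^sup>T = C"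
    and u: "u \<in> carrier_vec r" "u \<noteq> 0\<^sub>v r" and eig: "map_mat complex_of_real C *\<^sub>v u = a \<cdot>\<^sub>v u"
  shows "Im a = 0"
proof -
  have symi: "C $$ (i,j) = C $$ (j,i)" if "i < r" "j < r" for i j
    using sym that C by (metis carrier_matD(1) carrier_matD(2) index_transpose_mat(1))
  have eq: "(\<Sum>j<r. of_real (C $$ (i,j)) * u $ j) = a * u $ i" if i: "i < r" for i
  proof -
    have "(map_mat complex_of_real C *\<^sub>v u) $ i = (a \<cdot>\<^sub>v u) $ i" using eig by simp
    thus ?thesis using i C u(1) by (auto simp: scalar_prod_def row_def lessThan_atLeast0 mult.commute)
  qed
  \<comment> \<open>s is the Hermitian form of C at u: it is real because C is real symmetric, and s = a N with N > 0\<close>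
  define s where "s = (\<Sum>i<r. cnj (u $ i) * (\<Sum>j<r. of_real (C $$ (i,j)) * u $ j))"
  define N where "N = (\<Sum>i<r. cnj (u $ i) * u $ i)"
  have "s = (\<Sum>i<r. cnj (u $ i) * (a * u $ i))" unfolding s_def by (rule sum.cong) (simp_all add: eq)
  hence s_eq: "s = a * N" unfolding N_def by (simp add: sum_distrib_left mult.commute mult.left_commute)
  have "cnj s = (\<Sum>i<r. \<Sum>j<r. u $ i * of_real (C $$ (i,j)) * cnj (u $ j))"
    unfolding s_def by (simp add: sum_distrib_left mult.commute mult.left_commute)
  also have "\<dots> = (\<Sum>j<r. \<Sum>i<r. u $ i * of_real (C $$ (i,j)) * cnj (u $ j))" by (rule sum.swap)
  also have "\<dots> = s" unfolding s_def sum_distrib_left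
    by (intro sum.cong refl) (simp add: symi mult.commute mult.left_commute)
  finally have s_real: "cnj s = s" .
  have "N = (\<Sum>i<r. of_real ((cmod (u $ i))\<^sup>2))" unfolding N_def
    by (intro sum.cong refl) (metis complex_norm_square mult.commute)
  hence N_real: "N = of_real (\<Sum>i<r. (cmod (u $ i))\<^sup>2)" by simp
  have "(\<Sum>i<r. (cmod (u $ i))\<^sup>2) \<noteq> 0"
  proof
    assume "(\<Sum>i<r. (cmod (u $ i))\<^sup>2) = 0"
    hence "\<forall>i\<in>{..<r}. (cmod (u $ i))\<^sup>2 = 0" by (subst sum_nonneg_eq_0_iff[symmetric]) auto
    hence "u = 0\<^sub>v r" using u(1) by (auto simp: vec_eq_iff)
    thus False using u(2) by simp
  qed
  hence "N \<noteq> 0" using N_real by (metis of_real_eq_0_iff)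
  moreover have "cnj a * N = a * N" using s_eq s_real N_real by (metis complex_cnj_mult complex_cnj_complex_of_real)
  ultimately have "cnj a = a" by simp
  thus ?thesis by (metis Reals_cnj_iff complex_is_Real_iff)
qed

lemma real_symmetric_mat_eigenvector_exists:
  fixes C :: "real mat"
  assumes C: "C \<in> carrier_mat r r" and sym: "C\<^sup>T = C" and r: "0 < r"
  obtains \<mu> y where "y \<in> carrier_vec r" "y \<noteq> 0\<^sub>v r" "C *\<^sub>v y = \<mu> \<cdot>\<^sub>v y"
proof -
  let ?Cc = "map_mat complex_of_real C"
  have "?Cc \<in> carrier_mat r r" using C by simp
  from complex_mat_eigenvector_exists[OF this r]
  obtain a u where u: "u \<in> carrier_vec r" "u \<noteq> 0\<^sub>v r" and eig: "?Cc *\<^sub>v u = a \<cdot>\<^sub>v u" .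
  have ima: "Im a = 0" by (rule real_symmetric_mat_complex_eigenvalue_real[OF C sym u eig])
  have eq: "(\<Sum>j<r. of_real (C $$ (i,j)) * u $ j) = a * u $ i" if i: "i < r" for i
  proof -
    have "(?Cc *\<^sub>v u) $ i = (a \<cdot>\<^sub>v u) $ i" using eig by simp
    thus ?thesis using i C u(1) by (auto simp: scalar_prod_def row_def lessThan_atLeast0 mult.commute)
  qed
  \<comment> \<open>a is real, so the real and imaginary parts of u are real eigenvectors\<close>
  define x where "x = vec r (\<lambda>i. Re (u $ i))"
  define y where "y = vec r (\<lambda>i. Im (u $ i))"
  have ex: "C *\<^sub>v x = Re a \<cdot>\<^sub>v x"
  proof (rule eq_vecI)
    fix i assume "i < dim_vec (Re a \<cdot>\<^sub>v x)" hence i: "i < r" by (simp add: x_def)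
    have "Re (\<Sum>j<r. of_real (C $$ (i,j)) * u $ j) = Re (a * u $ i)" using eq[OF i] by simp
    thus "(C *\<^sub>v x) $ i = (Re a \<cdot>\<^sub>v x) $ i" using i C ima
      by (simp add: x_def scalar_prod_def row_def lessThan_atLeast0 Re_sum)
  qed (use C in \<open>simp add: x_def\<close>)
  have ey: "C *\<^sub>v y = Re a \<cdot>\<^sub>v y"
  proof (rule eq_vecI)
    fix i assume "i < dim_vec (Re a \<cdot>\<^sub>v y)" hence i: "i < r" by (simp add: y_def)
    have "Im (\<Sum>j<r. of_real (C $$ (i,j)) * u $ j) = Im (a * u $ i)" using eq[OF i] by simp
    thus "(C *\<^sub>v y) $ i = (Re a \<cdot>\<^sub>v y) $ i" using i C ima
      by (simp add: y_def scalar_prod_def row_def lessThan_atLeast0 Im_sum)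
  qed (use C in \<open>simp add: y_def\<close>)
  have "x \<noteq> 0\<^sub>v r \<or> y \<noteq> 0\<^sub>v r"
  proof (rule ccontr)
    assume "\<not> ?thesis"
    hence "\<forall>i<r. Re (u $ i) = 0 \<and> Im (u $ i) = 0" by (auto simp: x_def y_def vec_eq_iff)
    hence "u = 0\<^sub>v r" using u(1) by (auto simp: vec_eq_iff complex_eq_iff)
    thus False using u(2) by simp
  qed
  moreover have "x \<in> carrier_vec r" "y \<in> carrier_vec r" by (auto simp: x_def y_def)
  ultimately show ?thesis using that ex ey by blast
qed

lemma symmetric_mat_deflation:
  fixes G :: "real mat"
  assumes G: "G \<in> carrier_mat (Suc p) (Suc p)" and sym: "G\<^sup>T = G"
  obtains y zs \<mu> where "orthonormal (Suc p) (y # zs)" "length zs = p" "G *\<^sub>v y = \<mu> \<cdot>\<^sub>v y"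
    "G * mat_of_cols (Suc p) zs
      = mat_of_cols (Suc p) zs * ((mat_of_cols (Suc p) zs)\<^sup>T * (G * mat_of_cols (Suc p) zs))"
proof -
  obtain \<mu> y' where y': "y' \<in> carrier_vec (Suc p)" "y' \<noteq> 0\<^sub>v (Suc p)" "G *\<^sub>v y' = \<mu> \<cdot>\<^sub>v y'"
    using real_symmetric_mat_eigenvector_exists[OF G sym] by blast
  define y where "y = (1 / sqrt (y' \<bullet> y')) \<cdot>\<^sub>v y'"
  have y: "y \<in> carrier_vec (Suc p)" unfolding y_def using y'(1) by simp
  have "orthonormal (Suc p) [y]"
    using normalized_vec[OF y'(1,2)] y unfolding y_def orthonormal_def by simp
  then obtain zs where on: "orthonormal (Suc p) ([y] @ zs)" and len: "length ([y] @ zs) = Suc p"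
    by (rule orthonormal_extend_to_basis)
  have eig: "G *\<^sub>v y = \<mu> \<cdot>\<^sub>v y" unfolding y_def by (rule smult_eigenvector[OF G y'(1,3)])
  have zs: "set zs \<subseteq> carrier_vec (Suc p)" using orthonormalD(1)[OF on] by simp
  define Z where "Z = mat_of_cols (Suc p) zs"
  have Z: "Z \<in> carrier_mat (Suc p) p" unfolding Z_def using len mat_of_cols_carrier(1)[of "Suc p" zs] by simp
  have ZT: "Z\<^sup>T \<in> carrier_mat p (Suc p)" using Z by simp
  have GZ: "G * Z \<in> carrier_mat (Suc p) p" using G Z by simp
  have ZGZ: "Z * (Z\<^sup>T * (G * Z)) \<in> carrier_mat (Suc p) p" using Z ZT GZ by simp
  have "G * Z = Z * (Z\<^sup>T * (G * Z))"
  proof (rule mat_col_eqI)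
    fix j assume "j < dim_col (Z * (Z\<^sup>T * (G * Z)))"
    hence j: "j < p" using Z by simp
    have zj: "zs ! j \<in> set zs" using j len by simp
    hence zjc: "zs ! j \<in> carrier_vec (Suc p)" using zs by auto
    have "y \<noteq> zs ! j" using zj orthonormalD(2)[OF on] by auto
    hence yz: "y \<bullet> zs ! j = 0" using orthonormalD(4)[OF on] zj by simp
    have colG: "col (G * Z) j = G *\<^sub>v zs ! j"
      using col_mult2[OF G Z j] j len zjc unfolding Z_def by (simp add: col_mat_of_cols)
    have Gz: "G *\<^sub>v zs ! j \<in> carrier_vec (Suc p)" using G zjc by simp
    have "y \<bullet> (G *\<^sub>v zs ! j) = \<mu> * (y \<bullet> zs ! j)"
      using symmetric_mat_scalar_prod[OF G sym y zjc] eig y zjc by simp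
    hence "\<forall>u\<in>set [y]. u \<bullet> (G *\<^sub>v zs ! j) = 0" using yz by simp
    from orthonormal_basis_expansion[OF on len Gz this]
    have "G *\<^sub>v zs ! j = Z *\<^sub>v (Z\<^sup>T *\<^sub>v (G *\<^sub>v zs ! j))" unfolding Z_def .
    hence "col (G * Z) j = Z *\<^sub>v (Z\<^sup>T *\<^sub>v col (G * Z) j)" unfolding colG .
    also have "\<dots> = col (Z * (Z\<^sup>T * (G * Z))) j"
      using col_mult2[OF Z mult_carrier_mat[OF ZT GZ] j] col_mult2[OF ZT GZ j] by simp
    finally show "col (G * Z) j = col (Z * (Z\<^sup>T * (G * Z))) j" .
  qed (use G Z in auto)
  moreover have "length zs = p" using len by simp
  ultimately show ?thesis using that[of y zs] on eig unfolding Z_def by simp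
qed

lemma symmetric_mat_orthonormal_eigenbasis:
  fixes G :: "real mat"
  assumes "G \<in> carrier_mat n n" and "G\<^sup>T = G"
  obtains vs where "orthonormal n vs" "length vs = n" "\<forall>v\<in>set vs. \<exists>\<mu>. G *\<^sub>v v = \<mu> \<cdot>\<^sub>v v"
proof -
  have "\<exists>vs. orthonormal n vs \<and> length vs = n \<and> (\<forall>v\<in>set vs. \<exists>\<mu>. G *\<^sub>v v = \<mu> \<cdot>\<^sub>v v)"
    using assms
  proof (induction n arbitrary: G)
    case 0
    show ?case by (intro exI[of _ "[]"]) (simp add: orthonormal_def)
  next
    case (Suc p)
    note G = Suc.prems(1) and sym = Suc.prems(2)
    obtain y zs \<mu> where on: "orthonormal (Suc p) (y # zs)" and len: "length zs = p"
      and eig: "G *\<^sub>v y = \<mu> \<cdot>\<^sub>v y"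
      and GZ: "G * mat_of_cols (Suc p) zs
        = mat_of_cols (Suc p) zs * ((mat_of_cols (Suc p) zs)\<^sup>T * (G * mat_of_cols (Suc p) zs))"
      by (rule symmetric_mat_deflation[OF G sym])
    define Z where "Z = mat_of_cols (Suc p) zs"
    define G' where "G' = Z\<^sup>T * (G * Z)"
    have zs: "orthonormal (Suc p) zs" using orthonormal_subset[OF on] orthonormalD(2)[OF on] by auto
    have Z: "Z \<in> carrier_mat (Suc p) p" unfolding Z_def using len mat_of_cols_carrier(1)[of "Suc p" zs] by simp
    have ZT: "Z\<^sup>T \<in> carrier_mat p (Suc p)" using Z by simp
    have ZZ: "Z\<^sup>T * Z = 1\<^sub>m p" unfolding Z_def using orthonormal_gram[OF zs] len by simp
    have G': "G' \<in> carrier_mat p p" unfolding G'_def using ZT G Z by simp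
    have sym': "G'\<^sup>T = G'" unfolding G'_def by (rule symmetric_mat_compression[OF G sym Z])
    obtain qs where qs: "orthonormal p qs" "length qs = p" "\<forall>q\<in>set qs. \<exists>\<mu>. G' *\<^sub>v q = \<mu> \<cdot>\<^sub>v q"
      using Suc.IH[OF G' sym'] by blast
    have y: "y \<in> carrier_vec (Suc p)" using orthonormalD(1)[OF on] by simp
    have "orthonormal (Suc p) ([y] @ map ((*\<^sub>v) Z) qs)"
    proof (rule orthonormal_append)
      show "orthonormal (Suc p) [y]" using orthonormal_subset[OF on, of "[y]"] by simp
      show "orthonormal (Suc p) (map ((*\<^sub>v) Z) qs)" by (rule orthonormal_map_isometry[OF Z ZZ qs(1)])
      have "\<forall>z\<in>set zs. z \<bullet> y = 0" using orthonormalD(2,4)[OF on] by auto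
      hence Zy: "Z\<^sup>T *\<^sub>v y = 0\<^sub>v p"
        unfolding Z_def using mat_of_cols_transpose_mult_vec_eq_0_iff[OF orthonormalD(1)[OF zs]] len by simp
      fix u v assume "u \<in> set [y]" "v \<in> set (map ((*\<^sub>v) Z) qs)"
      then obtain q where q: "q \<in> set qs" "u = y" "v = Z *\<^sub>v q" by auto
      have qc: "q \<in> carrier_vec p" using q(1) orthonormalD(1)[OF qs(1)] by auto
      have "u \<bullet> v = (Z\<^sup>T *\<^sub>v y) \<bullet> q" using transpose_vec_mult_scalar[OF Z qc y] q by simp
      thus "u \<bullet> v = 0" using Zy qc by simp
    qed
    moreover have "\<forall>v\<in>set (map ((*\<^sub>v) Z) qs). \<exists>\<mu>. G *\<^sub>v v = \<mu> \<cdot>\<^sub>v v"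
      using intertwined_eigenvectors[OF G Z G' _ orthonormalD(1)[OF qs(1)] qs(3)] GZ
      unfolding Z_def G'_def by blast
    ultimately show ?case using eig qs(2) by (intro exI[of _ "y # map ((*\<^sub>v) Z) qs"]) auto
  qed
  thus ?thesis using that by blast
qed

lemma invariant_subspace_orthonormal_eigenbasis:
  fixes M :: "real mat"
  assumes M: "M \<in> carrier_mat n n" and sym: "M\<^sup>T = M" and on: "orthonormal n ws"
    and inv: "\<forall>w\<in>set ws. M *\<^sub>v w \<in> Col (mat_of_cols n ws)"
  obtains vs where "orthonormal n vs" "length vs = length ws"
    "Col (mat_of_cols n vs) = Col (mat_of_cols n ws)" "\<forall>v\<in>set vs. \<exists>\<mu>. M *\<^sub>v v = \<mu> \<cdot>\<^sub>v v"
proof -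
  let ?p = "length ws"
  define W where "W = mat_of_cols n ws"
  define G where "G = W\<^sup>T * (M * W)"
  have W: "W \<in> carrier_mat n ?p" and WT: "W\<^sup>T \<in> carrier_mat ?p n" unfolding W_def by auto
  have MW: "M * W \<in> carrier_mat n ?p" using M W by simp
  have G: "G \<in> carrier_mat ?p ?p" unfolding G_def using WT MW by simp
  have WW: "W\<^sup>T * W = 1\<^sub>m ?p" unfolding W_def by (rule orthonormal_gram[OF on])
  have "M * W = W * G"
  proof (rule mat_col_eqI)
    fix j assume "j < dim_col (W * G)"
    hence j: "j < ?p" using G by simp
    have wj: "ws ! j \<in> set ws" using j by simp
    have "ws ! j \<in> carrier_vec n" using wj orthonormalD(1)[OF on] by auto
    hence "col (M * W) j = M *\<^sub>v ws ! j"
      using col_mult2[OF M W j] j unfolding W_def by (simp add: col_mat_of_cols)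
    hence "col (M * W) j \<in> Col W" using inv wj unfolding W_def by simp
    hence "col (M * W) j = W *\<^sub>v (W\<^sup>T *\<^sub>v col (M * W) j)"
      unfolding W_def by (rule orthonormal_Col_expansion[OF on])
    also have "\<dots> = W *\<^sub>v col G j" unfolding G_def using col_mult2[OF WT MW j] by simp
    also have "\<dots> = col (W * G) j" using col_mult2[OF W G j] by simp
    finally show "col (M * W) j = col (W * G) j" .
  qed (use M W G in auto)
  moreover have "G\<^sup>T = G" unfolding G_def by (rule symmetric_mat_compression[OF M sym W])
  ultimately obtain qs where qs: "orthonormal ?p qs" "length qs = ?p" "\<forall>q\<in>set qs. \<exists>\<mu>. G *\<^sub>v q = \<mu> \<cdot>\<^sub>v q"
    using symmetric_mat_orthonormal_eigenbasis[OF G] by blast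
  note MWG = \<open>M * W = W * G\<close>
  have qc: "set qs \<subseteq> carrier_vec ?p" using orthonormalD(1)[OF qs(1)] .
  let ?Q = "mat_of_cols ?p qs"
  have Q: "?Q \<in> carrier_mat ?p ?p" using qs(2) mat_of_cols_carrier(1)[of ?p qs] by simp
  have "?Q * ?Q\<^sup>T = 1\<^sub>m ?p" using orthogonal_mat_right_inverse[OF Q] orthonormal_gram[OF qs(1)] qs(2) by simp
  hence "Col (W * ?Q) = Col W" using Col_mult_right_invertible[OF W Q transpose_carrier_mat[THEN iffD2, OF Q]] by simp
  hence "Col (mat_of_cols n (map ((*\<^sub>v) W) qs)) = Col (mat_of_cols n ws)"
    using mat_of_cols_map_mult_mat_vec[OF W qc] unfolding W_def by simp
  moreover have "orthonormal n (map ((*\<^sub>v) W) qs)" by (rule orthonormal_map_isometry[OF W WW qs(1)])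
  moreover have "\<forall>v\<in>set (map ((*\<^sub>v) W) qs). \<exists>\<mu>. M *\<^sub>v v = \<mu> \<cdot>\<^sub>v v"
    by (rule intertwined_eigenvectors[OF M W G MWG qc qs(3)])
  ultimately show ?thesis using that qs(2) by simp
qed

lemma symmetric_mat_orthogonal_complement_invariant:
  fixes M :: "real mat"
  assumes M: "M \<in> carrier_mat n n" and sym: "M\<^sup>T = M"
    and ws: "orthonormal n (ws1 @ ws2)" and len: "length (ws1 @ ws2) = n"
    and inv1: "\<forall>w\<in>set ws1. M *\<^sub>v w \<in> Col (mat_of_cols n ws1)"
  shows "\<forall>w\<in>set ws2. M *\<^sub>v w \<in> Col (mat_of_cols n ws2)"
proof
  fix w assume w: "w \<in> set ws2"
  have carr: "set ws1 \<subseteq> carrier_vec n" "set ws2 \<subseteq> carrier_vec n" using orthonormalD(1)[OF ws] by auto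
  have wc: "w \<in> carrier_vec n" using w carr by auto
  have Mw: "M *\<^sub>v w \<in> carrier_vec n" using M wc by simp
  have "\<forall>y\<in>set ws1. y \<bullet> (M *\<^sub>v w) = 0"
  proof
    fix y assume y: "y \<in> set ws1"
    have "y \<bullet> (M *\<^sub>v w) = (M *\<^sub>v y) \<bullet> w"
      using symmetric_mat_scalar_prod[OF M sym _ wc] y carr by auto
    also have "\<dots> = 0"
      using Col_orthogonal[OF ws] inv1 y set_subset_Col_mat_of_cols[OF carr(2)] w by blast
    finally show "y \<bullet> (M *\<^sub>v w) = 0" .
  qed
  from orthonormal_basis_expansion[OF ws len Mw this]
  have "M *\<^sub>v w = mat_of_cols n ws2 *\<^sub>v ((mat_of_cols n ws2)\<^sup>T *\<^sub>v (M *\<^sub>v w))" .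
  moreover have "(mat_of_cols n ws2)\<^sup>T \<in> carrier_mat (length ws2) n" by simp
  ultimately show "M *\<^sub>v w \<in> Col (mat_of_cols n ws2)"
    using mult_mat_vec_in_Col[OF mat_of_cols_carrier(1) mult_mat_vec_carrier[OF _ Mw]] by metis
qed

lemma symmetric_mat_orthonormal_eigenbasis_adapted:
  fixes M F :: "real mat"
  assumes M: "M \<in> carrier_mat n n" and sym: "M\<^sup>T = M" and F: "F \<in> carrier_mat n q"
    and inv: "\<forall>x\<in>Col F. M *\<^sub>v x \<in> Col F"
  obtains vs1 vs2 where "orthonormal n (vs1 @ vs2)" "length (vs1 @ vs2) = n"
    "\<forall>v\<in>set (vs1 @ vs2). \<exists>\<mu>. M *\<^sub>v v = \<mu> \<cdot>\<^sub>v v"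
    "Col (mat_of_cols n vs1) = Col F" "\<forall>v\<in>set vs2. F\<^sup>T *\<^sub>v v = 0\<^sub>v q"
proof -
  obtain ws1 where ws1: "orthonormal n ws1" and span1: "Col (mat_of_cols n ws1) = Col F"
    using orthonormal_basis_of_Col[OF F] by blast
  obtain ws2 where ws: "orthonormal n (ws1 @ ws2)" and len: "length (ws1 @ ws2) = n"
    using orthonormal_extend_to_basis[OF ws1] by blast
  have ws2: "orthonormal n ws2" using orthonormal_subset[OF ws] orthonormalD(2)[OF ws] by auto
  have carr: "set ws1 \<subseteq> carrier_vec n" "set ws2 \<subseteq> carrier_vec n" using orthonormalD(1)[OF ws] by auto
  have inv1: "\<forall>w\<in>set ws1. M *\<^sub>v w \<in> Col (mat_of_cols n ws1)"
    using set_subset_Col_mat_of_cols[OF carr(1)] inv span1 by auto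
  have inv2: "\<forall>w\<in>set ws2. M *\<^sub>v w \<in> Col (mat_of_cols n ws2)"
    by (rule symmetric_mat_orthogonal_complement_invariant[OF M sym ws len inv1])
  obtain vs1 where vs1: "orthonormal n vs1" "length vs1 = length ws1"
    "Col (mat_of_cols n vs1) = Col (mat_of_cols n ws1)" "\<forall>v\<in>set vs1. \<exists>\<mu>. M *\<^sub>v v = \<mu> \<cdot>\<^sub>v v"
    using invariant_subspace_orthonormal_eigenbasis[OF M sym ws1 inv1] by blast
  obtain vs2 where vs2: "orthonormal n vs2" "length vs2 = length ws2"
    "Col (mat_of_cols n vs2) = Col (mat_of_cols n ws2)" "\<forall>v\<in>set vs2. \<exists>\<mu>. M *\<^sub>v v = \<mu> \<cdot>\<^sub>v v"
    using invariant_subspace_orthonormal_eigenbasis[OF M sym ws2 inv2] by blast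
  have in1: "set vs1 \<subseteq> Col (mat_of_cols n ws1)"
    using set_subset_Col_mat_of_cols[OF orthonormalD(1)[OF vs1(1)]] vs1(3) by simp
  have in2: "set vs2 \<subseteq> Col (mat_of_cols n ws2)"
    using set_subset_Col_mat_of_cols[OF orthonormalD(1)[OF vs2(1)]] vs2(3) by simp
  have "orthonormal n (vs1 @ vs2)"
    using orthonormal_append[OF vs1(1) vs2(1)] Col_orthogonal[OF ws] in1 in2 by blast
  moreover have "length (vs1 @ vs2) = n" using len vs1(2) vs2(2) by simp
  moreover have "\<forall>v\<in>set (vs1 @ vs2). \<exists>\<mu>. M *\<^sub>v v = \<mu> \<cdot>\<^sub>v v" using vs1(4) vs2(4) by auto
  moreover have "Col (mat_of_cols n vs1) = Col F" using vs1(3) span1 by simp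
  moreover have "\<forall>v\<in>set vs2. F\<^sup>T *\<^sub>v v = 0\<^sub>v q"
  proof (intro ballI eq_vecI)
    fix v i assume v: "v \<in> set vs2" and "i < dim_vec (0\<^sub>v q :: real vec)"
    hence i: "i < q" by simp
    have "col F i \<in> Col (mat_of_cols n ws1)" using col_in_Col[OF F i] span1 by simp
    hence "col F i \<bullet> v = 0" using Col_orthogonal[OF ws] in2 v by blast
    thus "(F\<^sup>T *\<^sub>v v) $ i = 0\<^sub>v q $ i" using F i by simp
  qed (use F in simp)
  ultimately show ?thesis by (rule that)
qed

section \<open>Singular value decompositions from eigenbases\<close>

lemma down_closed_eq_less:
  fixes n :: nat
  assumes "\<And>i j. i \<le> j \<Longrightarrow> j < n \<Longrightarrow> P j \<Longrightarrow> P i"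
  shows "\<exists>p\<le>n. \<forall>j<n. P j \<longleftrightarrow> j < p"
  using assms
proof (induction n)
  case (Suc n)
  then obtain p where p: "p \<le> n" "\<forall>j<n. P j \<longleftrightarrow> j < p" by fastforce
  show ?case
  proof (cases "P n")
    case True
    hence "\<forall>j<Suc n. P j" using Suc.prems[of _ n] by (auto simp: less_Suc_eq)
    thus ?thesis by (intro exI[of _ "Suc n"]) auto
  next
    case False
    thus ?thesis using p by (intro exI[of _ p]) (auto simp: less_Suc_eq)
  qed
qed simp

lemma gram_eigenvector_images_orthogonal:
  fixes A :: "real mat"
  assumes A: "A \<in> carrier_mat m n" and on: "orthonormal n vs" and u: "u \<in> set vs" and v: "v \<in> set vs"
    and eig: "(A\<^sup>T * A) *\<^sub>v u = \<mu> \<cdot>\<^sub>v u" and uv: "u \<noteq> v"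
  shows "(A *\<^sub>v u) \<bullet> (A *\<^sub>v v) = 0"
proof -
  have uc: "u \<in> carrier_vec n" and vc: "v \<in> carrier_vec n" using u v orthonormalD(1)[OF on] by auto
  have AT: "A\<^sup>T \<in> carrier_mat n m" using A by simp
  have "(A *\<^sub>v u) \<bullet> (A *\<^sub>v v) = (A\<^sup>T *\<^sub>v (A *\<^sub>v u)) \<bullet> v"
    using transpose_vec_mult_scalar[OF A vc mult_mat_vec_carrier[OF A uc]] by simp
  also have "A\<^sup>T *\<^sub>v (A *\<^sub>v u) = \<mu> \<cdot>\<^sub>v u" using assoc_mult_mat_vec[OF AT A uc] eig by simp
  finally show ?thesis using orthonormalD(4)[OF on u v uv] uc vc by simp
qed

lemma orthogonal_images_transpose_eq_0:
  fixes A :: "real mat"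
  assumes A: "A \<in> carrier_mat m n" and on: "orthonormal n vs" and len: "length vs = n"
    and z: "z \<in> carrier_vec m" and orth: "\<forall>v\<in>set vs. z \<bullet> (A *\<^sub>v v) = 0"
  shows "A\<^sup>T *\<^sub>v z = 0\<^sub>v n"
proof (rule orthonormal_basis_orthogonal_eq_0[OF on len])
  show ATz: "A\<^sup>T *\<^sub>v z \<in> carrier_vec n" using A z by simp
  show "\<forall>v\<in>set vs. v \<bullet> (A\<^sup>T *\<^sub>v z) = 0"
  proof
    fix v assume v: "v \<in> set vs"
    hence vc: "v \<in> carrier_vec n" using orthonormalD(1)[OF on] by auto
    have "v \<bullet> (A\<^sup>T *\<^sub>v z) = (A\<^sup>T *\<^sub>v z) \<bullet> v" by (rule comm_scalar_prod[OF vc ATz])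
    also have "\<dots> = z \<bullet> (A *\<^sub>v v)" by (rule transpose_vec_mult_scalar[OF A vc z])
    finally show "v \<bullet> (A\<^sup>T *\<^sub>v z) = 0" using orth v by simp
  qed
qed

lemma left_singular_vectors_exist:
  fixes A :: "real mat"
  assumes A: "A \<in> carrier_mat m n" and on: "orthonormal n vs" and len: "length vs = n"
    and eig: "\<forall>v\<in>set vs. \<exists>\<mu>. (A\<^sup>T * A) *\<^sub>v v = \<mu> \<cdot>\<^sub>v v"
    and p: "\<And>j. j < n \<Longrightarrow> A *\<^sub>v vs ! j \<noteq> 0\<^sub>v m \<longleftrightarrow> j < p" and pn: "p \<le> n"
  obtains us where "orthonormal m us" "length us = m" "p \<le> m"
    "\<forall>j<p. us ! j = (1 / sqrt ((A *\<^sub>v vs ! j) \<bullet> (A *\<^sub>v vs ! j))) \<cdot>\<^sub>v (A *\<^sub>v vs ! j)"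
    "\<forall>j. p \<le> j \<longrightarrow> j < m \<longrightarrow> A\<^sup>T *\<^sub>v us ! j = 0\<^sub>v n"
proof -
  define \<sigma> where "\<sigma> j = sqrt ((A *\<^sub>v vs ! j) \<bullet> (A *\<^sub>v vs ! j))" for j
  define u where "u j = (1 / \<sigma> j) \<cdot>\<^sub>v (A *\<^sub>v vs ! j)" for j
  have vs: "vs ! j \<in> set vs" "vs ! j \<in> carrier_vec n" if "j < n" for j
    using that len orthonormalD(1)[OF on] by auto
  have Av: "A *\<^sub>v vs ! j \<in> carrier_vec m" if "j < n" for j using A vs(2)[OF that] by simp
  have pos: "0 < (A *\<^sub>v vs ! j) \<bullet> (A *\<^sub>v vs ! j)" if "j < p" for j
  proof -
    have jn: "j < n" using that pn by simp
    hence "(A *\<^sub>v vs ! j) \<bullet> (A *\<^sub>v vs ! j) \<noteq> 0"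
      using p[OF jn] that scalar_prod_self_eq_0_iff[OF Av[OF jn]] by simp
    thus ?thesis using scalar_prod_self_nonneg[of "A *\<^sub>v vs ! j"] by simp
  qed
  have u: "u j \<in> carrier_vec m" if "j < n" for j unfolding u_def using Av[OF that] by simp
  have "u i \<bullet> u j = (if i = j then 1 else 0)" if ij: "i < p" "j < p" for i j
  proof (cases "i = j")
    case True
    thus ?thesis unfolding u_def \<sigma>_def using pos[OF ij(1)] Av ij pn by simp
  next
    case False
    hence "vs ! i \<noteq> vs ! j" using orthonormalD(2)[OF on] ij pn len by (simp add: nth_eq_iff_index_eq)
    moreover obtain \<mu> where "(A\<^sup>T * A) *\<^sub>v vs ! i = \<mu> \<cdot>\<^sub>v vs ! i" using eig vs ij pn by force
    ultimately have "(A *\<^sub>v vs ! i) \<bullet> (A *\<^sub>v vs ! j) = 0"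
      using gram_eigenvector_images_orthogonal[OF A on] vs ij pn by simp
    thus ?thesis unfolding u_def using False Av ij pn by simp
  qed
  hence on0: "orthonormal m (map u [0..<p])" using u pn by (intro orthonormal_map_upt) auto
  then obtain zs where on': "orthonormal m (map u [0..<p] @ zs)" and len': "length (map u [0..<p] @ zs) = m"
    by (rule orthonormal_extend_to_basis)
  have pm: "p \<le> m" using orthonormal_length_le[OF on0] by simp
  have us_u: "(map u [0..<p] @ zs) ! j = u j" if "j < p" for j using that by (simp add: nth_append)
  have "A\<^sup>T *\<^sub>v (map u [0..<p] @ zs) ! j = 0\<^sub>v n" if j: "p \<le> j" "j < m" for j
  proof (rule orthogonal_images_transpose_eq_0[OF A on len])
    define z where "z = (map u [0..<p] @ zs) ! j"
    have zs: "z \<in> set zs" unfolding z_def using j len' by (simp add: nth_append)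
    have zc: "z \<in> carrier_vec m" using zs orthonormalD(1)[OF on'] by auto
    thus "(map u [0..<p] @ zs) ! j \<in> carrier_vec m" unfolding z_def .
    show "\<forall>v\<in>set vs. (map u [0..<p] @ zs) ! j \<bullet> (A *\<^sub>v v) = 0" unfolding z_def[symmetric]
    proof
      fix v assume v: "v \<in> set vs"
      obtain k where k: "k < n" "v = vs ! k" using v len by (auto simp: in_set_conv_nth)
      show "z \<bullet> (A *\<^sub>v v) = 0"
      proof (cases "k < p")
        case True
        have "u k \<in> set (map u [0..<p])" using True by simp
        hence "z \<noteq> u k" using zs orthonormalD(2)[OF on'] by auto
        hence "z \<bullet> u k = 0" using orthonormalD(4)[OF on'] zs \<open>u k \<in> set (map u [0..<p])\<close> by simp
        moreover have "A *\<^sub>v v = \<sigma> k \<cdot>\<^sub>v u k"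
          unfolding u_def \<sigma>_def k(2) using pos[OF True] by (simp add: smult_smult_assoc)
        ultimately show ?thesis using zc u[OF k(1)] by simp
      next
        case False
        hence "A *\<^sub>v v = 0\<^sub>v m" using p[OF k(1)] k(2) by simp
        thus ?thesis using zc by simp
      qed
    qed
  qed
  thus ?thesis using that[OF on' len' pm] us_u unfolding u_def \<sigma>_def by simp
qed

lemma svd_diagI:
  fixes A U V :: "real mat" and \<sigma> :: "nat \<Rightarrow> real" and m n :: nat
  defines "S \<equiv> mat m n (\<lambda>(i,j). if i = j then \<sigma> j else 0)"
  assumes A: "A \<in> carrier_mat m n" and U: "U \<in> carrier_mat m m" "U\<^sup>T * U = 1\<^sub>m m"
    and V: "V \<in> carrier_mat n n" "V\<^sup>T * V = 1\<^sub>m n"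
    and nonneg: "\<And>j. 0 \<le> \<sigma> j" and mono: "\<And>i j. i \<le> j \<Longrightarrow> j < min m n \<Longrightarrow> \<sigma> j \<le> \<sigma> i"
    and AV: "A * V = U * S"
  shows "svd A U S V"
proof -
  have S: "S \<in> carrier_mat m n" unfolding S_def by simp
  have "V * V\<^sup>T = 1\<^sub>m n" by (rule orthogonal_mat_right_inverse[OF V])
  hence "A = U * S * V\<^sup>T"
    using A AV assoc_mult_mat[OF A V(1) transpose_carrier_mat[THEN iffD2, OF V(1)]] by simp
  thus ?thesis unfolding svd_def Let_def
  proof (intro conjI allI impI)
    fix i j assume "i < dim_row A" "j < dim_col A" "i \<noteq> j"
    thus "S $$ (i,j) = 0" unfolding S_def using A by simp
  next
    fix i assume "i < min (dim_row A) (dim_col A)"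
    thus "0 \<le> S $$ (i,i)" unfolding S_def using A nonneg by simp
  next
    fix i j assume "i \<le> j" "j < min (dim_row A) (dim_col A)"
    thus "S $$ (j,j) \<le> S $$ (i,i)" unfolding S_def using A mono by simp
  qed (use A U V S in auto)
qed

lemma svd_of_sorted_orthonormal_eigenbasis:
  fixes A :: "real mat"
  assumes A: "A \<in> carrier_mat m n" and on: "orthonormal n vs" and len: "length vs = n"
    and eig: "\<forall>v\<in>set vs. \<exists>\<mu>. (A\<^sup>T * A) *\<^sub>v v = \<mu> \<cdot>\<^sub>v v"
    and sorted: "\<And>i j. i \<le> j \<Longrightarrow> j < n \<Longrightarrow>
      (A *\<^sub>v vs ! j) \<bullet> (A *\<^sub>v vs ! j) \<le> (A *\<^sub>v vs ! i) \<bullet> (A *\<^sub>v vs ! i)"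
  obtains U S where "svd A U S (mat_of_cols n vs)"
    "\<And>j. j < n \<Longrightarrow> A *\<^sub>v vs ! j \<noteq> 0\<^sub>v m \<Longrightarrow>
      j < m \<and> 0 < S $$ (j,j) \<and> col U j = (1 / S $$ (j,j)) \<cdot>\<^sub>v (A *\<^sub>v vs ! j)"
    "\<And>j. j < m \<Longrightarrow> (j < n \<and> A *\<^sub>v vs ! j \<noteq> 0\<^sub>v m) \<or> A\<^sup>T *\<^sub>v col U j = 0\<^sub>v n"
proof -
  define l where "l j = (A *\<^sub>v vs ! j) \<bullet> (A *\<^sub>v vs ! j)" for j
  have vs: "vs ! j \<in> carrier_vec n" if "j < n" for j using that len orthonormalD(1)[OF on] by auto
  have Av: "A *\<^sub>v vs ! j \<in> carrier_vec m" if "j < n" for j using A vs[OF that] by simp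
  have l0: "0 \<le> l j" for j unfolding l_def by (rule scalar_prod_self_nonneg)
  have l_pos: "0 < l j \<longleftrightarrow> A *\<^sub>v vs ! j \<noteq> 0\<^sub>v m" if "j < n" for j
    using l0[of j] scalar_prod_self_eq_0_iff[OF Av[OF that]] unfolding l_def by auto
  have dc: "A *\<^sub>v vs ! i \<noteq> 0\<^sub>v m" if "i \<le> j" "j < n" "A *\<^sub>v vs ! j \<noteq> 0\<^sub>v m" for i j
    using that sorted[of i j] l_pos[of i] l_pos[of j] unfolding l_def by force
  have "\<exists>p\<le>n. \<forall>j<n. A *\<^sub>v vs ! j \<noteq> 0\<^sub>v m \<longleftrightarrow> j < p"
    by (rule down_closed_eq_less) (rule dc)
  then obtain p where "p \<le> n \<and> (\<forall>j<n. A *\<^sub>v vs ! j \<noteq> 0\<^sub>v m \<longleftrightarrow> j < p)" ..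
  hence pn: "p \<le> n" and p: "\<And>j. j < n \<Longrightarrow> A *\<^sub>v vs ! j \<noteq> 0\<^sub>v m \<longleftrightarrow> j < p" by simp_all
  obtain us where us: "orthonormal m us" "length us = m" and pm: "p \<le> m"
    and us_pos: "\<forall>j<p. us ! j = (1 / sqrt (l j)) \<cdot>\<^sub>v (A *\<^sub>v vs ! j)"
    and us_null: "\<forall>j. p \<le> j \<longrightarrow> j < m \<longrightarrow> A\<^sup>T *\<^sub>v us ! j = 0\<^sub>v n"
    using left_singular_vectors_exist[OF A on len eig p pn] unfolding l_def by blast
  define U where "U = mat_of_cols m us"
  define V where "V = mat_of_cols n vs"
  define S where "S = mat m n (\<lambda>(i,j). if i = j then sqrt (l j) else 0)"
  have U: "U \<in> carrier_mat m m" unfolding U_def using us(2) mat_of_cols_carrier(1)[of m us] by simp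
  have V: "V \<in> carrier_mat n n" unfolding V_def using len mat_of_cols_carrier(1)[of n vs] by simp
  have S: "S \<in> carrier_mat m n" unfolding S_def by simp
  have colU: "col U j = us ! j" if "j < m" for j
    unfolding U_def using that us orthonormalD(1)[OF us(1)] by (simp add: col_mat_of_cols subsetD)
  have colV: "col V j = vs ! j" if "j < n" for j
    unfolding V_def using that len vs[OF that] by (simp add: col_mat_of_cols)
  have "A * V = U * S"
  proof (rule mat_col_eqI)
    fix j assume "j < dim_col (U * S)"
    hence j: "j < n" using S by simp
    have "col (A * V) j = A *\<^sub>v vs ! j" using col_mult2[OF A V j] colV[OF j] by simp
    moreover have "col (U * S) j = A *\<^sub>v vs ! j"
    proof (cases "j < p")
      case True
      hence jm: "j < m" using pm by simp
      have "col S j = sqrt (l j) \<cdot>\<^sub>v unit_vec m j"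
        unfolding S_def using j jm by (auto simp: vec_eq_iff unit_vec_def)
      hence "col (U * S) j = sqrt (l j) \<cdot>\<^sub>v us ! j"
        using col_mult2[OF U S j] mult_mat_vec[OF U unit_vec_carrier] mult_mat_unit_vec[OF U jm] colU[OF jm]
        by simp
      also have "\<dots> = A *\<^sub>v vs ! j"
        using us_pos[rule_format, OF True] l_pos[OF j] p[OF j] True by (simp add: smult_smult_assoc)
      finally show ?thesis .
    next
      case False
      hence "l j = 0" using l_pos[OF j] p[OF j] l0[of j] by simp
      hence "col S j = 0\<^sub>v m" unfolding S_def using j by (auto simp: vec_eq_iff)
      thus ?thesis using col_mult2[OF U S j] mult_mat_vec_zero[OF U] p[OF j] False by simp
    qed
    ultimately show "col (A * V) j = col (U * S) j" by simp
  qed (use A V U S in auto)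
  moreover have "U\<^sup>T * U = 1\<^sub>m m" unfolding U_def using orthonormal_gram[OF us(1)] us(2) by simp
  moreover have "V\<^sup>T * V = 1\<^sub>m n" unfolding V_def using orthonormal_gram[OF on] len by simp
  moreover have "sqrt (l j) \<le> sqrt (l i)" if "i \<le> j" "j < min m n" for i j
    using that sorted[of i j] by (simp add: l_def)
  ultimately have "svd A U S V" unfolding S_def by (intro svd_diagI[OF A U _ V]) (simp_all add: l0)
  moreover have "j < m \<and> 0 < S $$ (j,j) \<and> col U j = (1 / S $$ (j,j)) \<cdot>\<^sub>v (A *\<^sub>v vs ! j)"
    if j: "j < n" "A *\<^sub>v vs ! j \<noteq> 0\<^sub>v m" for j
  proof -
    have "j < p" "j < m" using p[OF j(1)] j(2) pm by auto
    moreover have "S $$ (j,j) = sqrt (l j)" "0 < l j" unfolding S_def using l_pos[OF j(1)] j calculation by auto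
    ultimately show ?thesis using us_pos colU by simp
  qed
  moreover have "(j < n \<and> A *\<^sub>v vs ! j \<noteq> 0\<^sub>v m) \<or> A\<^sup>T *\<^sub>v col U j = 0\<^sub>v n" if j: "j < m" for j
  proof (cases "j < p")
    case True thus ?thesis using p[of j] pn by simp
  next
    case False thus ?thesis using us_null colU[OF j] j by simp
  qed
  ultimately show ?thesis using that unfolding V_def by blast
qed

lemma svd_of_orthonormal_eigenbasis:
  fixes A :: "real mat"
  assumes A: "A \<in> carrier_mat m n" and on: "orthonormal n vs" and len: "length vs = n"
    and eig: "\<forall>v\<in>set vs. \<exists>\<mu>. (A\<^sup>T * A) *\<^sub>v v = \<mu> \<cdot>\<^sub>v v"
  obtains U S V where "svd A U S V" "set (cols V) = set vs"
    "\<forall>j<n. A *\<^sub>v col V j \<noteq> 0\<^sub>v m \<longrightarrow>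
      j < m \<and> 0 < S $$ (j,j) \<and> col U j = (1 / S $$ (j,j)) \<cdot>\<^sub>v (A *\<^sub>v col V j)"
    "\<forall>j<m. (j < n \<and> A *\<^sub>v col V j \<noteq> 0\<^sub>v m) \<or> A\<^sup>T *\<^sub>v col U j = 0\<^sub>v n"
proof -
  define key where "key v = - ((A *\<^sub>v v) \<bullet> (A *\<^sub>v v))" for v
  define ws where "ws = sort_key key vs"
  have set_ws: "set ws = set vs" and len_ws: "length ws = n" unfolding ws_def using len by simp_all
  have "distinct ws" unfolding ws_def using orthonormalD(2)[OF on] by simp
  hence on_ws: "orthonormal n ws" using orthonormal_subset[OF on] set_ws by simp
  have "sorted (map key ws)" unfolding ws_def by (rule sorted_sort_key)
  hence sorted: "(A *\<^sub>v ws ! j) \<bullet> (A *\<^sub>v ws ! j) \<le> (A *\<^sub>v ws ! i) \<bullet> (A *\<^sub>v ws ! i)"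
    if "i \<le> j" "j < n" for i j
    using sorted_nth_mono[of "map key ws" i j] that len_ws unfolding key_def by simp
  obtain U S where svd: "svd A U S (mat_of_cols n ws)"
    and pos: "\<And>j. j < n \<Longrightarrow> A *\<^sub>v ws ! j \<noteq> 0\<^sub>v m \<Longrightarrow>
      j < m \<and> 0 < S $$ (j,j) \<and> col U j = (1 / S $$ (j,j)) \<cdot>\<^sub>v (A *\<^sub>v ws ! j)"
    and null: "\<And>j. j < m \<Longrightarrow> (j < n \<and> A *\<^sub>v ws ! j \<noteq> 0\<^sub>v m) \<or> A\<^sup>T *\<^sub>v col U j = 0\<^sub>v n"
    using svd_of_sorted_orthonormal_eigenbasis[OF A on_ws len_ws] eig set_ws sorted by blast
  have colV: "col (mat_of_cols n ws) j = ws ! j" if "j < n" for j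
    using that len_ws orthonormalD(1)[OF on_ws] by (simp add: col_mat_of_cols subsetD)
  have "set (cols (mat_of_cols n ws)) = set vs"
    using cols_mat_of_cols[OF orthonormalD(1)[OF on_ws]] set_ws by simp
  moreover have "\<forall>j<n. A *\<^sub>v col (mat_of_cols n ws) j \<noteq> 0\<^sub>v m \<longrightarrow> j < m \<and> 0 < S $$ (j,j) \<and>
      col U j = (1 / S $$ (j,j)) \<cdot>\<^sub>v (A *\<^sub>v col (mat_of_cols n ws) j)"
    using pos colV by simp
  moreover have "\<forall>j<m. (j < n \<and> A *\<^sub>v col (mat_of_cols n ws) j \<noteq> 0\<^sub>v m) \<or>
      A\<^sup>T *\<^sub>v col U j = 0\<^sub>v n"
  proof (intro allI impI)
    fix j assume "j < m"
    thus "(j < n \<and> A *\<^sub>v col (mat_of_cols n ws) j \<noteq> 0\<^sub>v m) \<or> A\<^sup>T *\<^sub>v col U j = 0\<^sub>v n"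
      using null[of j] colV[of j] by auto
  qed
  ultimately show ?thesis by (rule that[OF svd])
qed

lemma svd_orthogonal:
  assumes "svd A U S V"
  shows "U \<in> carrier_mat (dim_row A) (dim_row A)" "U\<^sup>T * U = 1\<^sub>m (dim_row A)"
    "V \<in> carrier_mat (dim_col A) (dim_col A)" "V\<^sup>T * V = 1\<^sub>m (dim_col A)"
  using assms unfolding svd_def Let_def by blast+

section \<open>Matrices with equal Gram matrices\<close>

lemma gram_eq_kernel:
  fixes A B :: "real mat"
  assumes A: "A \<in> carrier_mat m n" and B: "B \<in> carrier_mat m n" and gram: "A\<^sup>T * A = B\<^sup>T * B"
    and v: "v \<in> carrier_vec n" and Av: "A *\<^sub>v v = 0\<^sub>v m"
  shows "B *\<^sub>v v = 0\<^sub>v m"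
proof -
  have AT: "A\<^sup>T \<in> carrier_mat n m" and BT: "B\<^sup>T \<in> carrier_mat n m" using A B by auto
  have Bv: "B *\<^sub>v v \<in> carrier_vec m" using B v by simp
  have "(B *\<^sub>v v) \<bullet> (B *\<^sub>v v) = (B\<^sup>T *\<^sub>v (B *\<^sub>v v)) \<bullet> v"
    using transpose_vec_mult_scalar[OF B v Bv] by simp
  also have "B\<^sup>T *\<^sub>v (B *\<^sub>v v) = (A\<^sup>T * A) *\<^sub>v v"
    unfolding gram by (rule assoc_mult_mat_vec[symmetric, OF BT B v])
  also have "\<dots> = A\<^sup>T *\<^sub>v (A *\<^sub>v v)" by (rule assoc_mult_mat_vec[OF AT A v])
  also have "\<dots> = 0\<^sub>v n" unfolding Av by (rule mult_mat_vec_zero[OF AT])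
  finally show ?thesis using scalar_prod_self_eq_0_iff[OF Bv] v by simp
qed

lemma gram_eq_cross_term:
  fixes A E :: "real mat"
  assumes A: "A \<in> carrier_mat m n" and E: "E \<in> carrier_mat m n"
    and gram: "A * A\<^sup>T = (A + E) * (A + E)\<^sup>T"
  shows "A * E\<^sup>T = - (E * (A + E)\<^sup>T)"
proof (rule eq_matI)
  fix i j assume "i < dim_row (- (E * (A + E)\<^sup>T))" "j < dim_col (- (E * (A + E)\<^sup>T))"
  hence i: "i < m" and j: "j < m" using E A by auto
  have c: "row A i \<in> carrier_vec n" "row E i \<in> carrier_vec n" "row A j \<in> carrier_vec n" "row E j \<in> carrier_vec n"
    using A E i j by auto
  have rows: "row (A + E) i = row A i + row E i" "row (A + E) j = row A j + row E j"
    using A E i j by auto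
  have "row A i \<bullet> row A j = (A * A\<^sup>T) $$ (i,j)" using A i j by simp
  also have "\<dots> = ((A + E) * (A + E)\<^sup>T) $$ (i,j)" unfolding gram ..
  also have "\<dots> = row (A + E) i \<bullet> row (A + E) j" using A E i j by simp
  also have "\<dots> = row A i \<bullet> row A j + row A i \<bullet> row E j + row E i \<bullet> (row A j + row E j)"
    unfolding rows using c by (simp add: add_scalar_prod_distrib[of _ n] scalar_prod_add_distrib[of _ n])
  finally have "row A i \<bullet> row E j = - (row E i \<bullet> (row A j + row E j))" by linarith
  also have "row A j + row E j = row (A + E) j" using rows by simp
  finally show "(A * E\<^sup>T) $$ (i,j) = (- (E * (A + E)\<^sup>T)) $$ (i,j)" using A E i j by simp
qed (use A E in auto)

locale gram_pair =
  fixes A E :: "real mat" and m n :: nat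
  assumes A: "A \<in> carrier_mat m n" and E: "E \<in> carrier_mat m n"
    and row_gram: "A * A\<^sup>T = (A + E) * (A + E)\<^sup>T"
    and col_gram: "A\<^sup>T * A = (A + E)\<^sup>T * (A + E)"
begin

lemma carriers: "A\<^sup>T \<in> carrier_mat n m" "E\<^sup>T \<in> carrier_mat n m" "A + E \<in> carrier_mat m n"
  "(A + E)\<^sup>T \<in> carrier_mat n m"
  using A E by auto

lemma cross_term_left: "A * E\<^sup>T = - (E * (A + E)\<^sup>T)"
  by (rule gram_eq_cross_term[OF A E row_gram])

lemma cross_term_right: "A\<^sup>T * E = - (E\<^sup>T * (A + E))"
proof -
  have "A\<^sup>T + E\<^sup>T = (A + E)\<^sup>T" using transpose_add[OF A E] by simp
  hence "A\<^sup>T * A\<^sup>T\<^sup>T = (A\<^sup>T + E\<^sup>T) * (A\<^sup>T + E\<^sup>T)\<^sup>T" using col_gram by simp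
  from gram_eq_cross_term[OF carriers(1,2) this] \<open>A\<^sup>T + E\<^sup>T = (A + E)\<^sup>T\<close> show ?thesis by simp
qed

lemma cross_term_left_vec:
  assumes y: "y \<in> carrier_vec m"
  shows "A *\<^sub>v (E\<^sup>T *\<^sub>v y) = - (E *\<^sub>v ((A + E)\<^sup>T *\<^sub>v y))"
proof -
  have "A *\<^sub>v (E\<^sup>T *\<^sub>v y) = (A * E\<^sup>T) *\<^sub>v y" by (rule assoc_mult_mat_vec[symmetric, OF A carriers(2) y])
  also have "\<dots> = - ((E * (A + E)\<^sup>T) *\<^sub>v y)" unfolding cross_term_left using E carriers y by simp
  also have "(E * (A + E)\<^sup>T) *\<^sub>v y = E *\<^sub>v ((A + E)\<^sup>T *\<^sub>v y)"
    by (rule assoc_mult_mat_vec[OF E carriers(4) y])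
  finally show ?thesis .
qed

lemma cross_term_right_vec:
  assumes z: "z \<in> carrier_vec n"
  shows "A\<^sup>T *\<^sub>v (E *\<^sub>v z) = - (E\<^sup>T *\<^sub>v ((A + E) *\<^sub>v z))"
proof -
  have "A\<^sup>T *\<^sub>v (E *\<^sub>v z) = (A\<^sup>T * E) *\<^sub>v z" by (rule assoc_mult_mat_vec[symmetric, OF carriers(1) E z])
  also have "\<dots> = - ((E\<^sup>T * (A + E)) *\<^sub>v z)" unfolding cross_term_right using E carriers z by simp
  also have "(E\<^sup>T * (A + E)) *\<^sub>v z = E\<^sup>T *\<^sub>v ((A + E) *\<^sub>v z)"
    by (rule assoc_mult_mat_vec[OF carriers(2,3) z])
  finally show ?thesis .
qed

lemma Row_invariant: "\<forall>x\<in>Col E\<^sup>T. (A\<^sup>T * A) *\<^sub>v x \<in> Col E\<^sup>T"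
proof
  fix x assume "x \<in> Col E\<^sup>T"
  then obtain y where y: "y \<in> carrier_vec m" "x = E\<^sup>T *\<^sub>v y" using ColE[OF carriers(2)] by blast
  have By: "(A + E)\<^sup>T *\<^sub>v y \<in> carrier_vec n" using carriers(4) y(1) by simp
  have x: "x \<in> carrier_vec n" using y carriers(2) by simp
  have "(A\<^sup>T * A) *\<^sub>v x = A\<^sup>T *\<^sub>v (A *\<^sub>v (E\<^sup>T *\<^sub>v y))"
    using assoc_mult_mat_vec[OF carriers(1) A x] y(2) by simp
  also have "\<dots> = - (A\<^sup>T *\<^sub>v (E *\<^sub>v ((A + E)\<^sup>T *\<^sub>v y)))"
    unfolding cross_term_left_vec[OF y(1)] using mult_mat_vec_uminus[OF carriers(1)] E By by simp
  also have "\<dots> = E\<^sup>T *\<^sub>v ((A + E) *\<^sub>v ((A + E)\<^sup>T *\<^sub>v y))"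
    unfolding cross_term_right_vec[OF By] by simp
  finally show "(A\<^sup>T * A) *\<^sub>v x \<in> Col E\<^sup>T"
    using mult_mat_vec_in_Col[OF carriers(2)] carriers(3) By by simp
qed

lemma kernel_subset:
  assumes v: "v \<in> carrier_vec n" and Av: "A *\<^sub>v v = 0\<^sub>v m"
  shows "E *\<^sub>v v = 0\<^sub>v m"
proof -
  have "(A + E) *\<^sub>v v = 0\<^sub>v m" by (rule gram_eq_kernel[OF A carriers(3) col_gram v Av])
  thus ?thesis using add_mult_distrib_mat_vec[OF A E v] Av E v by simp
qed

lemma left_kernel_subset:
  assumes r: "r \<in> carrier_vec m" and ATr: "A\<^sup>T *\<^sub>v r = 0\<^sub>v n"
  shows "E\<^sup>T *\<^sub>v r = 0\<^sub>v n"
proof -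
  have "A\<^sup>T\<^sup>T * A\<^sup>T = (A + E)\<^sup>T\<^sup>T * (A + E)\<^sup>T" using row_gram by simp
  from gram_eq_kernel[OF carriers(1,4) this r ATr]
  have "(A\<^sup>T + E\<^sup>T) *\<^sub>v r = 0\<^sub>v n" using transpose_add[OF A E] by simp
  thus ?thesis using add_mult_distrib_mat_vec[OF carriers(1,2) r] ATr carriers(2) r by simp
qed

lemma image_Row_subset_Col:
  assumes "v \<in> Col E\<^sup>T"
  shows "A *\<^sub>v v \<in> Col E"
proof -
  obtain y where y: "y \<in> carrier_vec m" "v = E\<^sup>T *\<^sub>v y" using ColE[OF carriers(2) assms] by blast
  have By: "(A + E)\<^sup>T *\<^sub>v y \<in> carrier_vec n" using carriers(4) y(1) by simp
  have "A *\<^sub>v v = E *\<^sub>v (- ((A + E)\<^sup>T *\<^sub>v y))"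
    unfolding y(2) cross_term_left_vec[OF y(1)] using mult_mat_vec_uminus[OF E By] by simp
  thus ?thesis using mult_mat_vec_in_Col[OF E] By by simp
qed

lemma image_kernel_orthogonal_Col:
  assumes v: "v \<in> carrier_vec n" and Ev: "E *\<^sub>v v = 0\<^sub>v m"
  shows "E\<^sup>T *\<^sub>v (A *\<^sub>v v) = 0\<^sub>v n"
proof -
  have "E\<^sup>T * A = (A\<^sup>T * E)\<^sup>T" using transpose_mult[OF carriers(1) E] by simp
  also have "\<dots> = - ((A + E)\<^sup>T * E)"
    unfolding cross_term_right transpose_uminus using transpose_mult[OF carriers(2,3)] by simp
  finally have "E\<^sup>T *\<^sub>v (A *\<^sub>v v) = - ((A + E)\<^sup>T * E) *\<^sub>v v"
    using assoc_mult_mat_vec[OF carriers(2) A v] by simp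
  also have "\<dots> = - ((A + E)\<^sup>T *\<^sub>v (E *\<^sub>v v))"
    using assoc_mult_mat_vec[OF carriers(4) E v] E v by simp
  finally show ?thesis using Ev carriers(4) by (simp add: mult_mat_vec_zero)
qed

lemma Row_mult_nonzero:
  assumes v: "v \<in> Row E" and v0: "v \<noteq> 0\<^sub>v n"
  shows "A *\<^sub>v v \<noteq> 0\<^sub>v m"
proof
  assume Av: "A *\<^sub>v v = 0\<^sub>v m"
  have "v \<in> Col E\<^sup>T" using v Row_eq_Col_transpose by simp
  moreover have "v \<in> carrier_vec n" using calculation Col_carrier[OF carriers(2)] by blast
  ultimately have "v = 0\<^sub>v n" using Col_transpose_inter_kernel[OF E] kernel_subset Av by blast
  thus False using v0 by simp
qed

lemma adapted_svd:
  obtains U S V vs1 where "svd A U S V" "orthonormal n vs1" "Col (mat_of_cols n vs1) = Row E"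
    "set vs1 \<subseteq> set (cols V)" "\<forall>j<n. col V j \<notin> set vs1 \<longrightarrow> E *\<^sub>v col V j = 0\<^sub>v m"
    "\<forall>j<n. A *\<^sub>v col V j \<noteq> 0\<^sub>v m \<longrightarrow>
      j < m \<and> 0 < S $$ (j,j) \<and> col U j = (1 / S $$ (j,j)) \<cdot>\<^sub>v (A *\<^sub>v col V j)"
    "\<forall>j<m. (j < n \<and> A *\<^sub>v col V j \<noteq> 0\<^sub>v m) \<or> A\<^sup>T *\<^sub>v col U j = 0\<^sub>v n"
proof -
  have M: "A\<^sup>T * A \<in> carrier_mat n n" using A by simp
  have sym: "(A\<^sup>T * A)\<^sup>T = A\<^sup>T * A" using transpose_mult[OF carriers(1) A] by simp
  obtain vs1 vs2 where on: "orthonormal n (vs1 @ vs2)" and len: "length (vs1 @ vs2) = n"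
    and eig: "\<forall>v\<in>set (vs1 @ vs2). \<exists>\<mu>. (A\<^sup>T * A) *\<^sub>v v = \<mu> \<cdot>\<^sub>v v"
    and span: "Col (mat_of_cols n vs1) = Col E\<^sup>T" and null: "\<forall>v\<in>set vs2. E\<^sup>T\<^sup>T *\<^sub>v v = 0\<^sub>v m"
    using symmetric_mat_orthonormal_eigenbasis_adapted[OF M sym carriers(2) Row_invariant] by blast
  obtain U S V where svd: "svd A U S V" and setV: "set (cols V) = set (vs1 @ vs2)"
    and pos: "\<forall>j<n. A *\<^sub>v col V j \<noteq> 0\<^sub>v m \<longrightarrow>
      j < m \<and> 0 < S $$ (j,j) \<and> col U j = (1 / S $$ (j,j)) \<cdot>\<^sub>v (A *\<^sub>v col V j)"
    and left_null: "\<forall>j<m. (j < n \<and> A *\<^sub>v col V j \<noteq> 0\<^sub>v m) \<or> A\<^sup>T *\<^sub>v col U j = 0\<^sub>v n"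
    using svd_of_orthonormal_eigenbasis[OF A on len eig] by blast
  have V: "V \<in> carrier_mat n n" using svd_orthogonal(3)[OF svd] A by simp
  have "orthonormal n vs1" using orthonormal_subset[OF on] orthonormalD(2)[OF on] by auto
  moreover have "Col (mat_of_cols n vs1) = Row E" using span Row_eq_Col_transpose by simp
  moreover have "set vs1 \<subseteq> set (cols V)" using setV by auto
  moreover have "\<forall>j<n. col V j \<notin> set vs1 \<longrightarrow> E *\<^sub>v col V j = 0\<^sub>v m"
  proof (intro allI impI)
    fix j assume j: "j < n" "col V j \<notin> set vs1"
    have "col V j \<in> set (cols V)" using V j by (auto simp: cols_def)
    hence "col V j \<in> set vs2" using setV j by auto
    thus "E *\<^sub>v col V j = 0\<^sub>v m" using null by simp
  qed
  ultimately show ?thesis using that[OF svd] pos left_null by blast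
qed

lemma singular_vector_bases:
  obtains U S V I where "svd A U S V" "I \<subseteq> {..<min m n}" "\<forall>i\<in>I. 0 < S $$ (i,i)"
    "inj_on (col V) I" "inj_on (col U) I"
    "basis_of n (Row E) (col V ` I)" "basis_of m (Col E) (col U ` I)"
proof -
  obtain U S V vs1 where svd: "svd A U S V" and on1: "orthonormal n vs1"
    and span1: "Col (mat_of_cols n vs1) = Row E" and sub1: "set vs1 \<subseteq> set (cols V)"
    and ker: "\<forall>j<n. col V j \<notin> set vs1 \<longrightarrow> E *\<^sub>v col V j = 0\<^sub>v m"
    and pos: "\<forall>j<n. A *\<^sub>v col V j \<noteq> 0\<^sub>v m \<longrightarrow>
      j < m \<and> 0 < S $$ (j,j) \<and> col U j = (1 / S $$ (j,j)) \<cdot>\<^sub>v (A *\<^sub>v col V j)"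
    and left_null: "\<forall>j<m. (j < n \<and> A *\<^sub>v col V j \<noteq> 0\<^sub>v m) \<or> A\<^sup>T *\<^sub>v col U j = 0\<^sub>v n"
    by (rule adapted_svd)
  have U: "U \<in> carrier_mat m m" "U\<^sup>T * U = 1\<^sub>m m" and V: "V \<in> carrier_mat n n" "V\<^sup>T * V = 1\<^sub>m n"
    using svd_orthogonal[OF svd] A by auto
  define I where "I = {j. j < n \<and> col V j \<in> set vs1}"
  have Row: "col V j \<in> Col E\<^sup>T" if "j \<in> I" for j
    using that set_subset_Col_mat_of_cols[OF orthonormalD(1)[OF on1]] span1 Row_eq_Col_transpose
    unfolding I_def by auto
  have Av: "A *\<^sub>v col V j \<noteq> 0\<^sub>v m" if j: "j \<in> I" for j
  proof (rule Row_mult_nonzero)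
    show "col V j \<in> Row E" using Row[OF j] Row_eq_Col_transpose by simp
    have "col V j \<bullet> col V j = 1" using orthonormalD(3)[OF on1] j unfolding I_def by simp
    thus "col V j \<noteq> 0\<^sub>v n" by auto
  qed
  have I: "I \<subseteq> {..<min m n}" and I_m: "I \<subseteq> {..<m}"
    using pos Av unfolding I_def by auto
  have "\<forall>i\<in>I. 0 < S $$ (i,i)" using pos Av unfolding I_def by auto
  moreover have "I \<subseteq> {..<n}" using I by auto
  hence "inj_on (col V) I" by (rule inj_on_subset[OF orthogonal_mat_inj_on_cols[OF V]])
  moreover have "inj_on (col U) I" using inj_on_subset[OF orthogonal_mat_inj_on_cols[OF U] I_m] .
  moreover have "col V ` I = set vs1"
  proof
    show "col V ` I \<subseteq> set vs1" unfolding I_def by auto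
    show "set vs1 \<subseteq> col V ` I"
    proof
      fix v assume v: "v \<in> set vs1"
      then obtain j where "j < n" "v = col V j" using sub1 V by (auto simp: cols_def)
      thus "v \<in> col V ` I" using v unfolding I_def by auto
    qed
  qed
  hence "basis_of n (Row E) (col V ` I)" using basis_of_orthonormal[OF on1 span1] by simp
  moreover have "basis_of m (Col E) (col U ` I)"
  proof (rule basis_of_Col_orthogonal_mat_cols[OF E U I_m])
    show "col U ` I \<subseteq> Col E"
    proof
      fix u assume "u \<in> col U ` I"
      then obtain j where j: "j \<in> I" "u = col U j" by blast
      have "A *\<^sub>v col V j \<in> Col E" by (rule image_Row_subset_Col[OF Row[OF j(1)]])
      thus "u \<in> Col E" using pos Av[OF j(1)] j Col_smult[OF E] unfolding I_def by auto
    qed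
    show "\<forall>j<m. j \<notin> I \<longrightarrow> E\<^sup>T *\<^sub>v col U j = 0\<^sub>v n"
    proof (intro allI impI)
      fix j assume j: "j < m" "j \<notin> I"
      show "E\<^sup>T *\<^sub>v col U j = 0\<^sub>v n"
      proof (cases "j < n \<and> A *\<^sub>v col V j \<noteq> 0\<^sub>v m")
        case True
        have vc: "col V j \<in> carrier_vec n" using col_dim[of V j] V by simp
        have "E *\<^sub>v col V j = 0\<^sub>v m" using ker True j unfolding I_def by auto
        hence EAv: "E\<^sup>T *\<^sub>v (A *\<^sub>v col V j) = 0\<^sub>v n" by (rule image_kernel_orthogonal_Col[OF vc])
        have "col U j = (1 / S $$ (j,j)) \<cdot>\<^sub>v (A *\<^sub>v col V j)" using pos True by blast
        hence "E\<^sup>T *\<^sub>v col U j = (1 / S $$ (j,j)) \<cdot>\<^sub>v (E\<^sup>T *\<^sub>v (A *\<^sub>v col V j))"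
          using mult_mat_vec[OF carriers(2)] A vc by simp
        also have "\<dots> = 0\<^sub>v n" unfolding EAv by (intro eq_vecI) auto
        finally show ?thesis .
      next
        case False
        hence "A\<^sup>T *\<^sub>v col U j = 0\<^sub>v n" using left_null j by blast
        moreover have "col U j \<in> carrier_vec m" using col_dim[of U j] U by simp
        ultimately show ?thesis using left_kernel_subset by simp
      qed
    qed
  qed
  ultimately show ?thesis using that[OF svd I] by blast
qed

end

theorem lemma3p4:
  fixes A E :: "real mat" and k :: nat
  assumes "realizable E"
    and "mat_rank E = k"
    and "A \<in> carrier_mat (dim_row E) (dim_col E)"
    and "zero_one_mat A"
    and "gram_mates A (A + E)"
  shows "\<exists>U S V. svd A U S V \<and>
           (\<exists>I. I \<subseteq> {..<min (dim_row A) (dim_col A)} \<and> card I = k \<and>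
                (\<forall>i\<in>I. S $$ (i,i) > 0) \<and>
                inj_on (col V) I \<and> inj_on (col U) I \<and>
                basis_of (dim_col E) (Row E) (col V ` I) \<and>
                basis_of (dim_row E) (Col E) (col U ` I))"
proof -
  have E: "E \<in> carrier_mat (dim_row E) (dim_col E)" by simp
  have dims: "dim_row A = dim_row E" "dim_col A = dim_col E" using assms(3) by auto
  interpret gram_pair A E "dim_row E" "dim_col E"
    using assms(3,5) E unfolding gram_mates_def by unfold_locales blast+
  obtain U S V I where "svd A U S V" "I \<subseteq> {..<min (dim_row E) (dim_col E)}"
    "\<forall>i\<in>I. 0 < S $$ (i,i)" "inj_on (col V) I" "inj_on (col U) I"
    "basis_of (dim_col E) (Row E) (col V ` I)" "basis_of (dim_row E) (Col E) (col U ` I)"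
    by (rule singular_vector_bases)
  moreover have "card I = k"
    using card_basis_of_Col[OF E \<open>basis_of (dim_row E) (Col E) (col U ` I)\<close>]
      card_image[OF \<open>inj_on (col U) I\<close>] assms(2) by simp
  ultimately show ?thesis unfolding dims by blast
qed

end
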